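(* Let $\mathcal{B}$ be a central simple complex algebra, let $\mathcal{B}_{\mathbb{R}}$ be $\mathcal{B}$ regarded as a real algebra, let $G$ be an abelian group and $\Gamma:\mathcal{B}_{\mathbb{R}}=\bigoplus_{g\in G}(\mathcal{B}_{\mathbb{R}})_g$ a $G$-grading of the real algebra $\mathcal{B}_{\mathbb{R}}$. Then either (1) the induced grading on the centroid $C(\mathcal{B}_{\mathbb{R}})=\mathbb{C}1$ is trivial, in which case every $(\mathcal{B}_{\mathbb{R}})_g$ is a complex subspace and $\Gamma$ is a $G$-grading of the complex algebra $\mathcal{B}$; or (2) there is an element $h\in G$ of order $2$ with $C(\mathcal{B}_{\mathbb{R}})_e=\mathbb{R}1$ and $C(\mathcal{B}_{\mathbb{R}})_h=\mathbb{R}\mathbf{i}$ (where $\mathbf{i}$ denotes $x\mapsto\mathbf{i}x$), $\mathcal{B}_{\mathbb{R}}$ is $G$-graded-central-simple, and, with $H=\langle h\rangle$ and $\pi:G\to G/H$ the projection, there exist a central simple $G/H$-graded real algebra $\mathcal{A}$ and $\tau\in\mathrm{Z}^2_{\mathrm{sym}}(G,\mathbb{R}^\times)$ such that $\mathcal{B}_{\mathbb{R}}\simeq_G L^\tau_\pi(\mathcal{A})$; moreover, $\mathcal{A}$ is a real form of $\mathcal{B}$, i.e. $\mathcal{B}\simeq\mathcal{A}\otimes_{\mathbb{R}}\mathbb{C}$ as complex algebras.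
   Context: Algebras are arbitrary (nonassociative) algebras. Central simple: simple with centroid equal to the scalars. Centroid $C(\mathcal{A})=\{c\in\mathrm{End}(\mathcal{A}):c(xy)=c(x)y=xc(y)\}$, with $C(\mathcal{A})_g=\{c:c\mathcal{A}_{g'}\subseteq\mathcal{A}_{gg'}\ \forall g'\}$; the grading on $\mathcal{B}_{\mathbb{R}}$ induces $C(\mathcal{B}_{\mathbb{R}})=\bigoplus_g C(\mathcal{B}_{\mathbb{R}})_g$, and "trivial" means $C=C_e$. Graded-central-simple: $\mathcal{A}^2=\mathcal{A}$, no proper nonzero graded ideals, $C(\mathcal{A})_e$ equal to the scalars. $\mathrm{Z}^2_{\mathrm{sym}}(G,\mathbb{R}^\times)$: symmetric $2$-cocycles $G\times G\to\mathbb{R}^\times$. Loop algebra $L_\pi(\mathcal{A})=\bigoplus_{g\in G}\mathcal{A}_{\pi(g)}\otimes g\subseteq\mathcal{A}\otimes_{\mathbb{R}}\mathbb{R}G$, $G$-graded; $L^\tau_\pi(\mathcal{A})$ is its $\tau$-twist, i.e. the same graded space with multiplication $x*y=\tau(g_1,g_2)xy$ for homogeneous $x,y$ of degrees $g_1,g_2$. $\simeq_G$ denotes graded isomorphism. *)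

theory Defs
  imports Complex_Main
begin

text \<open>A complex vector space is a real vector space with a real-linear J, J(J x) = -x
(J = multiplication by i). The abelian group G is a type 'g of class ab_group_add
(written additively, identity 0).\<close>

definition ralg :: "'b::real_vector set \<Rightarrow> ('b \<Rightarrow> 'b \<Rightarrow> 'b) \<Rightarrow> bool" where
  "ralg S m \<longleftrightarrow> subspace S \<and> (\<forall>x\<in>S. \<forall>y\<in>S. m x y \<in> S)
     \<and> (\<forall>x\<in>S. \<forall>y\<in>S. \<forall>z\<in>S. m (x + y) z = m x z + m y z \<and> m z (x + y) = m z x + m z y)
     \<and> (\<forall>r. \<forall>x\<in>S. \<forall>y\<in>S. m (r *\<^sub>R x) y = r *\<^sub>R m x y \<and> m x (r *\<^sub>R y) = r *\<^sub>R m x y)"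

definition rideal :: "'b::real_vector set \<Rightarrow> ('b \<Rightarrow> 'b \<Rightarrow> 'b) \<Rightarrow> 'b set \<Rightarrow> bool" where
  "rideal S m I \<longleftrightarrow> subspace I \<and> I \<subseteq> S \<and> (\<forall>x\<in>S. \<forall>y\<in>I. m x y \<in> I \<and> m y x \<in> I)"

definition rsimple :: "'b::real_vector set \<Rightarrow> ('b \<Rightarrow> 'b \<Rightarrow> 'b) \<Rightarrow> bool" where
  "rsimple S m \<longleftrightarrow> (\<exists>x\<in>S. \<exists>y\<in>S. m x y \<noteq> 0) \<and> (\<forall>I. rideal S m I \<longrightarrow> I = {0} \<or> I = S)"

definition lin_on :: "'b::real_vector set \<Rightarrow> ('b \<Rightarrow> 'b) \<Rightarrow> bool" where
  "lin_on S c \<longleftrightarrow> (\<forall>x\<in>S. c x \<in> S) \<and> (\<forall>x\<in>S. \<forall>y\<in>S. c (x + y) = c x + c y)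
     \<and> (\<forall>r. \<forall>x\<in>S. c (r *\<^sub>R x) = r *\<^sub>R c x)"

definition rcentroid :: "'b::real_vector set \<Rightarrow> ('b \<Rightarrow> 'b \<Rightarrow> 'b) \<Rightarrow> ('b \<Rightarrow> 'b) set" where
  "rcentroid S m = {c. lin_on S c \<and> (\<forall>x\<in>S. \<forall>y\<in>S. c (m x y) = m (c x) y \<and> c (m x y) = m x (c y))}"

definition rcentral_simple :: "'b::real_vector set \<Rightarrow> ('b \<Rightarrow> 'b \<Rightarrow> 'b) \<Rightarrow> bool" where
  "rcentral_simple S m \<longleftrightarrow> ralg S m \<and> rsimple S m
     \<and> (\<forall>c\<in>rcentroid S m. \<exists>r. \<forall>x\<in>S. c x = r *\<^sub>R x)"

definition calg :: "('b::real_vector \<Rightarrow> 'b) \<Rightarrow> ('b \<Rightarrow> 'b \<Rightarrow> 'b) \<Rightarrow> bool" where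
  "calg J m \<longleftrightarrow> linear J \<and> (\<forall>x. J (J x) = - x) \<and> ralg UNIV m
     \<and> (\<forall>x y. m (J x) y = J (m x y) \<and> m x (J y) = J (m x y))"

definition cideal :: "('b::real_vector \<Rightarrow> 'b) \<Rightarrow> ('b \<Rightarrow> 'b \<Rightarrow> 'b) \<Rightarrow> 'b set \<Rightarrow> bool" where
  "cideal J m I \<longleftrightarrow> rideal UNIV m I \<and> J ` I \<subseteq> I"

definition csimple :: "('b::real_vector \<Rightarrow> 'b) \<Rightarrow> ('b \<Rightarrow> 'b \<Rightarrow> 'b) \<Rightarrow> bool" where
  "csimple J m \<longleftrightarrow> (\<exists>x y. m x y \<noteq> 0) \<and> (\<forall>I. cideal J m I \<longrightarrow> I = {0} \<or> I = UNIV)"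

definition ccentroid :: "('b::real_vector \<Rightarrow> 'b) \<Rightarrow> ('b \<Rightarrow> 'b \<Rightarrow> 'b) \<Rightarrow> ('b \<Rightarrow> 'b) set" where
  "ccentroid J m = {c. linear c \<and> (\<forall>x. c (J x) = J (c x))
     \<and> (\<forall>x y. c (m x y) = m (c x) y \<and> c (m x y) = m x (c y))}"

definition ccentral_simple :: "('b::real_vector \<Rightarrow> 'b) \<Rightarrow> ('b \<Rightarrow> 'b \<Rightarrow> 'b) \<Rightarrow> bool" where
  "ccentral_simple J m \<longleftrightarrow> calg J m \<and> csimple J m
     \<and> (\<forall>c\<in>ccentroid J m. \<exists>a b. c = (\<lambda>x. a *\<^sub>R x + b *\<^sub>R J x))"

text \<open>Grading of the real algebra (S, m) by the index set I with operation op
  (op restricted to I is the group operation).\<close>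
definition grading :: "'b::real_vector set \<Rightarrow> ('b \<Rightarrow> 'b \<Rightarrow> 'b) \<Rightarrow> 'i set \<Rightarrow> ('i \<Rightarrow> 'i \<Rightarrow> 'i)
    \<Rightarrow> ('i \<Rightarrow> 'b set) \<Rightarrow> bool" where
  "grading S m I op W \<longleftrightarrow> (\<forall>i\<in>I. subspace (W i) \<and> W i \<subseteq> S)
     \<and> (\<forall>x\<in>S. \<exists>!f. (\<forall>i. i \<notin> I \<longrightarrow> f i = 0) \<and> (\<forall>i\<in>I. f i \<in> W i)
            \<and> finite {i. f i \<noteq> 0} \<and> x = (\<Sum>i\<in>{i. f i \<noteq> 0}. f i))
     \<and> (\<forall>i\<in>I. \<forall>j\<in>I. \<forall>x\<in>W i. \<forall>y\<in>W j. m x y \<in> W (op i j))"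

definition cent_comp :: "('b::real_vector \<Rightarrow> 'b \<Rightarrow> 'b) \<Rightarrow> ('g::ab_group_add \<Rightarrow> 'b set) \<Rightarrow> 'g
    \<Rightarrow> ('b \<Rightarrow> 'b) set" where
  "cent_comp m V g = {c \<in> rcentroid UNIV m. \<forall>g'. c ` V g' \<subseteq> V (g + g')}"

definition graded_ideal :: "('b::real_vector \<Rightarrow> 'b \<Rightarrow> 'b) \<Rightarrow> ('g::ab_group_add \<Rightarrow> 'b set)
    \<Rightarrow> 'b set \<Rightarrow> bool" where
  "graded_ideal m V I \<longleftrightarrow> rideal UNIV m I \<and>
     (\<forall>x\<in>I. \<forall>f. (\<forall>g. f g \<in> V g) \<and> finite {g. f g \<noteq> 0} \<and> x = (\<Sum>g\<in>{g. f g \<noteq> 0}. f g)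
        \<longrightarrow> (\<forall>g. f g \<in> I))"

definition graded_central_simple :: "('b::real_vector \<Rightarrow> 'b \<Rightarrow> 'b) \<Rightarrow> ('g::ab_group_add \<Rightarrow> 'b set)
    \<Rightarrow> bool" where
  "graded_central_simple m V \<longleftrightarrow> span {m x y | x y. True} = UNIV
     \<and> (\<forall>I. graded_ideal m V I \<longrightarrow> I = {0} \<or> I = UNIV)
     \<and> cent_comp m V 0 = {(\<lambda>x. r *\<^sub>R x) | r. True}"

text \<open>The coset g + H of H = <h> = {0, h} (h of order 2), i.e. the projection pi(g).\<close>
definition coset :: "'g::ab_group_add \<Rightarrow> 'g \<Rightarrow> 'g set" where
  "coset h g = {g, g + h}"

definition setadd :: "'g::ab_group_add set \<Rightarrow> 'g set \<Rightarrow> 'g set" where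
  "setadd A B = {a + b | a b. a \<in> A \<and> b \<in> B}"

definition sym_cocycle :: "('g::ab_group_add \<Rightarrow> 'g \<Rightarrow> real) \<Rightarrow> bool" where
  "sym_cocycle \<tau> \<longleftrightarrow> (\<forall>a b. \<tau> a b \<noteq> 0 \<and> \<tau> a b = \<tau> b a)
     \<and> (\<forall>a b c. \<tau> a b * \<tau> (a + b) c = \<tau> b c * \<tau> a (b + c))"

text \<open>Twisted loop algebra: elements of A \<otimes> RG are finitely supported functions G \<Rightarrow> A;
  L_pi(A) consists of those with f g \<in> A_{pi g}.\<close>
definition loop_carrier :: "'g::ab_group_add \<Rightarrow> ('g set \<Rightarrow> 'b::real_vector set) \<Rightarrow> ('g \<Rightarrow> 'b) set" where
  "loop_carrier h W = {f. finite {g. f g \<noteq> 0} \<and> (\<forall>g. f g \<in> W (coset h g))}"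

definition loop_mul :: "('b::real_vector \<Rightarrow> 'b \<Rightarrow> 'b) \<Rightarrow> ('g::ab_group_add \<Rightarrow> 'g \<Rightarrow> real)
    \<Rightarrow> ('g \<Rightarrow> 'b) \<Rightarrow> ('g \<Rightarrow> 'b) \<Rightarrow> ('g \<Rightarrow> 'b)" where
  "loop_mul m \<tau> f1 f2 = (\<lambda>k. \<Sum>g\<in>{g. f1 g \<noteq> 0}. \<tau> g (k - g) *\<^sub>R m (f1 g) (f2 (k - g)))"

definition loop_comp :: "'g::ab_group_add \<Rightarrow> ('g set \<Rightarrow> 'b::real_vector set) \<Rightarrow> 'g \<Rightarrow> ('g \<Rightarrow> 'b) set" where
  "loop_comp h W g = {f \<in> loop_carrier h W. \<forall>k. k \<noteq> g \<longrightarrow> f k = 0}"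

definition graded_iso_loop :: "('b::real_vector \<Rightarrow> 'b \<Rightarrow> 'b) \<Rightarrow> ('g::ab_group_add \<Rightarrow> 'b set) \<Rightarrow> 'g
    \<Rightarrow> ('b \<Rightarrow> 'b \<Rightarrow> 'b) \<Rightarrow> ('g set \<Rightarrow> 'b set) \<Rightarrow> ('g \<Rightarrow> 'g \<Rightarrow> real) \<Rightarrow> ('b \<Rightarrow> 'g \<Rightarrow> 'b) \<Rightarrow> bool" where
  "graded_iso_loop m V h m' W \<tau> \<phi> \<longleftrightarrow> bij_betw \<phi> UNIV (loop_carrier h W)
     \<and> (\<forall>x y. \<phi> (x + y) = (\<lambda>k. \<phi> x k + \<phi> y k))
     \<and> (\<forall>r x. \<phi> (r *\<^sub>R x) = (\<lambda>k. r *\<^sub>R \<phi> x k))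
     \<and> (\<forall>x y. \<phi> (m x y) = loop_mul m' \<tau> (\<phi> x) (\<phi> y))
     \<and> (\<forall>g. \<phi> ` V g = loop_comp h W g)"

text \<open>psi : B \<rightarrow> A \<otimes>_R C (pairs (a1,a2) = a1 + i a2) is an isomorphism of complex algebras.\<close>
definition complexification_iso :: "('b::real_vector \<Rightarrow> 'b) \<Rightarrow> ('b \<Rightarrow> 'b \<Rightarrow> 'b) \<Rightarrow> 'b set
    \<Rightarrow> ('b \<Rightarrow> 'b \<Rightarrow> 'b) \<Rightarrow> ('b \<Rightarrow> 'b \<times> 'b) \<Rightarrow> bool" where
  "complexification_iso J m S m' \<psi> \<longleftrightarrow> bij_betw \<psi> UNIV (S \<times> S)
     \<and> (\<forall>x y. \<psi> (x + y) = (fst (\<psi> x) + fst (\<psi> y), snd (\<psi> x) + snd (\<psi> y)))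
     \<and> (\<forall>r x. \<psi> (r *\<^sub>R x) = (r *\<^sub>R fst (\<psi> x), r *\<^sub>R snd (\<psi> x)))
     \<and> (\<forall>x. \<psi> (J x) = (- snd (\<psi> x), fst (\<psi> x)))
     \<and> (\<forall>x y. \<psi> (m x y) =
          (m' (fst (\<psi> x)) (fst (\<psi> y)) - m' (snd (\<psi> x)) (snd (\<psi> y)),
           m' (fst (\<psi> x)) (snd (\<psi> y)) + m' (snd (\<psi> x)) (fst (\<psi> y))))"

end

theory Submission
  imports Defs
begin

text \<open>Multiplication by \<open>\<i>\<close> is the centroid element \<open>J\<close> of \<open>B\<^sub>\<real>\<close>, and the homogeneous
  components of \<open>J\<close> are again in the centroid \<open>\<complex>1\<close>. A complex scalar that shifts degrees by
  \<open>k \<noteq> 0\<close> is a real multiple of \<open>J\<close> and \<open>2k = 0\<close>; so either \<open>J\<close> has degree \<open>0\<close>, i.e. the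
  grading is complex, or \<open>J\<close> is homogeneous of a degree \<open>h\<close> of order two.

  In the second case choose a character \<open>\<chi> : G \<rightarrow> \<complex>\<^sup>\<times>\<close> with \<open>\<chi> h = -1\<close> (it exists since
  \<open>\<complex>\<^sup>\<times>\<close> is divisible) and a square root \<open>u\<close> of \<open>\<chi>\<close>, and fix a representative \<open>rep g\<close> of
  each coset \<open>g + {0, h}\<close>. Then \<open>e g = u g / u (rep g) \<in> {1, \<plusminus>\<i>}\<close> maps \<open>V g\<close> onto
  \<open>V (rep g)\<close>, and \<open>x \<mapsto> (e g x\<^sub>g)\<^sub>g\<close> is a graded isomorphism onto the loop algebra of the
  real form \<open>A = \<Oplus>\<^bsub>rep g = g\<^esub> V g\<close> (with the multiplication transported by \<open>u\<close>),
  twisted by the symmetric sign cocycle \<open>\<tau> a b = u (a + b) / (u a u b)\<close>.\<close>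


section \<open>Integer multiples in an abelian group\<close>

primrec nat_mult :: "nat \<Rightarrow> 'g::ab_group_add \<Rightarrow> 'g" where
  "nat_mult 0 g = 0"
| "nat_mult (Suc n) g = g + nat_mult n g"

definition int_mult :: "int \<Rightarrow> 'g::ab_group_add \<Rightarrow> 'g" where
  "int_mult j g = (if 0 \<le> j then nat_mult (nat j) g else - nat_mult (nat (- j)) g)"

lemma int_mult_0 [simp]: "int_mult 0 g = 0"
  by (simp add: int_mult_def)

lemma int_mult_1 [simp]: "int_mult 1 g = g"
  by (simp add: int_mult_def)

lemma int_mult_succ: "int_mult (j + 1) g = int_mult j g + g"
proof (cases "0 \<le> j")
  case True
  then have "nat (j + 1) = Suc (nat j)" by simp
  with True show ?thesis by (simp add: int_mult_def add.commute)
next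
  case False
  show ?thesis
  proof (cases "j = -1")
    case False
    with \<open>\<not> 0 \<le> j\<close> have "nat (- j) = Suc (nat (- (j + 1)))" by simp
    with \<open>\<not> 0 \<le> j\<close> False show ?thesis by (simp add: int_mult_def algebra_simps)
  qed (simp add: int_mult_def)
qed

lemma int_mult_pred: "int_mult (j - 1) g = int_mult j g - g"
  using int_mult_succ[of "j - 1" g] by simp

lemma int_mult_add: "int_mult (i + j) g = int_mult i g + int_mult j g"
proof (induction i rule: int_induct[where k = 0])
  case (step1 i)
  have "int_mult (i + 1 + j) g = int_mult (i + j) g + g"
    using int_mult_succ[of "i + j" g] by (simp only: ac_simps)
  also have "\<dots> = int_mult (i + 1) g + int_mult j g"
    using step1 int_mult_succ[of i g] by (simp only: ac_simps)
  finally show ?case .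
next
  case (step2 i)
  have "int_mult (i - 1 + j) g = int_mult (i + j) g - g"
    using int_mult_pred[of "i + j" g] by (simp add: algebra_simps)
  also have "\<dots> = int_mult (i - 1) g + int_mult j g"
    using step2 int_mult_pred[of i g] by (simp add: algebra_simps)
  finally show ?case .
qed simp

lemma int_mult_minus: "int_mult (- i) g = - int_mult i g"
  using int_mult_add[of i "- i" g] by (simp add: eq_neg_iff_add_eq_0 add.commute)

lemma int_mult_mult: "int_mult (i * j) g = int_mult i (int_mult j g)"
proof (induction i rule: int_induct[where k = 0])
  case (step1 i)
  then show ?case by (simp add: distrib_right int_mult_add int_mult_succ)
next
  case (step2 i)
  then show ?case
    by (simp add: left_diff_distrib int_mult_pred int_mult_add[of _ "- j", simplified] int_mult_minus)
qed simp


section \<open>Characters into the nonzero complex numbers\<close>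

text \<open>A partial character is the graph of a homomorphism from a subgroup of \<open>'g\<close> into
  the multiplicative group of \<open>\<complex>\<close>.\<close>

definition partial_character :: "('g::ab_group_add \<times> complex) set \<Rightarrow> bool" where
  "partial_character F \<longleftrightarrow> (0, 1) \<in> F
     \<and> (\<forall>a z b w. (a, z) \<in> F \<longrightarrow> (b, w) \<in> F \<longrightarrow> (a + b, z * w) \<in> F)
     \<and> (\<forall>a z w. (a, z) \<in> F \<longrightarrow> (a, w) \<in> F \<longrightarrow> z = w)
     \<and> (\<forall>a z. (a, z) \<in> F \<longrightarrow> z \<noteq> 0 \<and> (- a, inverse z) \<in> F)"

context
  fixes M :: "('g::ab_group_add \<times> complex) set"
  assumes M: "partial_character M"
begin

lemma partial_character_zero: "(0, 1) \<in> M"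
  using M by (simp add: partial_character_def)

lemma partial_character_mult: "(a, z) \<in> M \<Longrightarrow> (b, w) \<in> M \<Longrightarrow> (a + b, z * w) \<in> M"
  using M by (simp add: partial_character_def)

lemma partial_character_unique: "(a, z) \<in> M \<Longrightarrow> (a, w) \<in> M \<Longrightarrow> z = w"
  using M by (simp add: partial_character_def)

lemma partial_character_nonzero: "(a, z) \<in> M \<Longrightarrow> z \<noteq> 0"
  using M by (simp add: partial_character_def)

lemma partial_character_inverse: "(a, z) \<in> M \<Longrightarrow> (- a, inverse z) \<in> M"
  using M by (simp add: partial_character_def)

lemma partial_character_int_mult: "(a, z) \<in> M \<Longrightarrow> (int_mult j a, z powi j) \<in> M"
proof (induction j rule: int_induct[where k = 0])
  case base
  show ?case using partial_character_zero by simp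
next
  case (step1 i)
  then have "(int_mult i a + a, z powi i * z) \<in> M" by (simp add: partial_character_mult)
  with step1 show ?case by (simp add: int_mult_succ power_int_add_1 partial_character_nonzero)
next
  case (step2 i)
  then have "(int_mult i a + - a, z powi i * inverse z) \<in> M"
    by (blast intro: partial_character_mult partial_character_inverse)
  with step2 show ?case
    by (simp add: int_mult_pred power_int_diff divide_inverse partial_character_nonzero)
qed

lemma partial_character_int_mult_abs:
  assumes "(int_mult j g, z) \<in> M"
  shows "int_mult (int (nat \<bar>j\<bar>)) g \<in> fst ` M"
proof (cases "0 \<le> j")
  case True
  with assms show ?thesis by force
next
  case False
  have "(int_mult (- j) g, inverse z) \<in> M"
    using partial_character_inverse[OF assms] by (simp add: int_mult_minus)
  with False show ?thesis by force
qed

text \<open>The multiples of \<open>g\<close> in the domain of \<open>M\<close> form a subgroup \<open>n\<^sub>0\<int>\<close>; choosing an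
  \<open>n\<^sub>0\<close>-th root \<open>\<omega>\<close> of the value at \<open>n\<^sub>0 g\<close>, the assignment \<open>g \<mapsto> \<omega>\<close> is compatible with \<open>M\<close>.\<close>

lemma partial_character_root_on_multiples:
  "\<exists>\<omega>. \<omega> \<noteq> 0 \<and> (\<forall>j z. (int_mult j g, z) \<in> M \<longrightarrow> z = \<omega> powi j)"
proof (cases "\<exists>n::nat. 0 < n \<and> int_mult (int n) g \<in> fst ` M")
  case True
  define n0 where "n0 = (LEAST n::nat. 0 < n \<and> int_mult (int n) g \<in> fst ` M)"
  have n0: "0 < n0" "int_mult (int n0) g \<in> fst ` M"
    using LeastI_ex[OF True] unfolding n0_def by auto
  have n0_least: "n0 \<le> n" if "0 < n" "int_mult (int n) g \<in> fst ` M" for n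
    using that unfolding n0_def by (simp add: Least_le)
  obtain z0 where z0: "(int_mult (int n0) g, z0) \<in> M" using n0(2) by force
  have "z0 \<noteq> 0" using partial_character_nonzero[OF z0] .
  have "1 \<in> {z::complex. z ^ n0 = 1}" by simp
  then obtain \<omega> where \<omega>: "\<omega> ^ n0 = z0"
    using bij_betw_nth_root_unity[OF \<open>z0 \<noteq> 0\<close> n0(1)] unfolding bij_betw_def by blast
  show ?thesis
  proof (intro exI conjI allI impI)
    show "\<omega> \<noteq> 0" using \<omega> \<open>z0 \<noteq> 0\<close> n0(1) by auto
    fix j z assume jz: "(int_mult j g, z) \<in> M"
    define q where "q = j div int n0"
    define r where "r = j mod int n0"
    have j: "j = q * int n0 + r" and r: "0 \<le> r" "r < int n0"
      using n0(1) by (simp_all add: q_def r_def)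
    have "(- int_mult q (int_mult (int n0) g), inverse (z0 powi q)) \<in> M"
      by (intro partial_character_inverse partial_character_int_mult z0)
    from partial_character_mult[OF jz this]
    have rz: "(int_mult r g, z * inverse (z0 powi q)) \<in> M"
      by (simp add: j int_mult_add int_mult_mult)
    have "r = 0"
    proof (rule ccontr)
      assume "r \<noteq> 0"
      have "int_mult (int (nat r)) g \<in> fst ` M"
        using partial_character_int_mult_abs[OF rz] r(1) by simp
      with \<open>r \<noteq> 0\<close> r(1) have "n0 \<le> nat r" by (intro n0_least) simp_all
      with r show False by linarith
    qed
    then have "z * inverse (z0 powi q) = 1"
      using partial_character_unique[OF rz] partial_character_zero by simp
    then have "z = z0 powi q" using \<open>z0 \<noteq> 0\<close> by (simp add: field_simps)
    also have "\<dots> = \<omega> powi j" by (simp add: \<omega>[symmetric] power_int_power j \<open>r = 0\<close> mult.commute)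
    finally show "z = \<omega> powi j" .
  qed
next
  case False
  show ?thesis
  proof (intro exI conjI allI impI)
    fix j z assume jz: "(int_mult j g, z) \<in> M"
    have "j = 0"
    proof (rule ccontr)
      assume "j \<noteq> 0"
      then have "0 < nat \<bar>j\<bar>" by simp
      with False partial_character_int_mult_abs[OF jz] show False by blast
    qed
    with jz have "z = 1" using partial_character_unique[OF _ partial_character_zero] by simp
    then show "z = 1 powi j" by simp
  qed simp
qed

lemma partial_character_extend:
  assumes g: "g \<notin> fst ` M"
  shows "\<exists>M'. partial_character M' \<and> M \<subset> M'"
proof -
  obtain \<omega> where \<omega>0: "\<omega> \<noteq> 0" and \<omega>: "\<And>j z. (int_mult j g, z) \<in> M \<Longrightarrow> z = \<omega> powi j"
    using partial_character_root_on_multiples by blast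
  define M' where "M' = {(k + int_mult j g, z * \<omega> powi j) | k z j. (k, z) \<in> M}"
  have M'I: "(k + int_mult j g, z * \<omega> powi j) \<in> M'" if "(k, z) \<in> M" for k z j
    using that unfolding M'_def by blast
  have "partial_character M'"
    unfolding partial_character_def
  proof (intro conjI allI impI)
    show "(0, 1) \<in> M'" using M'I[OF partial_character_zero, of 0] by simp
  next
    fix a z b w assume "(a, z) \<in> M'" "(b, w) \<in> M'"
    then obtain k1 z1 j1 k2 z2 j2 where 1: "(k1, z1) \<in> M" "a = k1 + int_mult j1 g" "z = z1 * \<omega> powi j1"
      and 2: "(k2, z2) \<in> M" "b = k2 + int_mult j2 g" "w = z2 * \<omega> powi j2"
      unfolding M'_def by blast
    from M'I[OF partial_character_mult[OF 1(1) 2(1)], of "j1 + j2"]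
    show "(a + b, z * w) \<in> M'" using 1 2 \<omega>0 by (simp add: int_mult_add power_int_add algebra_simps)
  next
    fix a z w assume "(a, z) \<in> M'" "(a, w) \<in> M'"
    then obtain k1 z1 j1 k2 z2 j2 where 1: "(k1, z1) \<in> M" "a = k1 + int_mult j1 g" "z = z1 * \<omega> powi j1"
      and 2: "(k2, z2) \<in> M" "a = k2 + int_mult j2 g" "w = z2 * \<omega> powi j2"
      unfolding M'_def by blast
    have "k2 + int_mult j2 g = (k1 + int_mult (j1 - j2) g) + int_mult j2 g"
      using 1(2) 2(2) int_mult_add[of "j1 - j2" j2 g] by (simp add: add.assoc)
    then have "k2 + - k1 = int_mult (j1 - j2) g" by (simp add: algebra_simps)
    with partial_character_mult[OF 2(1) partial_character_inverse[OF 1(1)]]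
    have "z2 * inverse z1 = \<omega> powi (j1 - j2)" using \<omega> by simp
    then have "z2 * \<omega> powi j2 = z1 * \<omega> powi j1"
      using partial_character_nonzero[OF 1(1)] \<omega>0 by (simp add: power_int_diff field_simps)
    then show "z = w" using 1 2 by simp
  next
    fix a z assume "(a, z) \<in> M'"
    then obtain k z1 j where 1: "(k, z1) \<in> M" "a = k + int_mult j g" "z = z1 * \<omega> powi j"
      unfolding M'_def by blast
    show "z \<noteq> 0" using 1 \<omega>0 partial_character_nonzero[OF 1(1)] by simp
    from M'I[OF partial_character_inverse[OF 1(1)], of "- j"]
    show "(- a, inverse z) \<in> M'" using 1 by (simp add: int_mult_minus power_int_minus)
  qed
  moreover have "M \<subseteq> M'"
  proof
    fix p assume "p \<in> M"
    then show "p \<in> M'" using M'I[of "fst p" "snd p" 0] by simp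
  qed
  moreover have "M' \<noteq> M"
  proof
    assume "M' = M"
    moreover have "(g, \<omega>) \<in> M'" using M'I[OF partial_character_zero, of 1] by simp
    ultimately show False using g by force
  qed
  ultimately show ?thesis by blast
qed

end

lemma partial_character_Union:
  assumes "C \<noteq> {}" and chain: "chain\<^sub>\<subseteq> C" and C: "\<And>X. X \<in> C \<Longrightarrow> partial_character X"
  shows "partial_character (\<Union>C)"
proof -
  have two: "\<exists>X\<in>C. p \<in> X \<and> q \<in> X" if "p \<in> \<Union>C" "q \<in> \<Union>C" for p q
    using that chain unfolding chain_subset_def by blast
  show ?thesis
    unfolding partial_character_def
  proof (intro conjI allI impI)
    obtain X where "X \<in> C" using \<open>C \<noteq> {}\<close> by blast
    then show "(0, 1) \<in> \<Union>C" using C partial_character_zero by blast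
  next
    fix a z b w assume "(a, z) \<in> \<Union>C" "(b, w) \<in> \<Union>C"
    then obtain X where "X \<in> C" "(a, z) \<in> X" "(b, w) \<in> X" using two by blast
    then show "(a + b, z * w) \<in> \<Union>C" using C partial_character_mult by blast
  next
    fix a z w assume "(a, z) \<in> \<Union>C" "(a, w) \<in> \<Union>C"
    then obtain X where "X \<in> C" "(a, z) \<in> X" "(a, w) \<in> X" using two by blast
    then show "z = w" using C partial_character_unique by blast
  next
    fix a z assume "(a, z) \<in> \<Union>C"
    then obtain X where "X \<in> C" "(a, z) \<in> X" by blast
    then show "z \<noteq> 0" "(- a, inverse z) \<in> \<Union>C"
      using C partial_character_nonzero partial_character_inverse by blast+
  qed
qed

lemma partial_character_extends:
  assumes F0: "partial_character F0"
  shows "\<exists>\<chi>. (\<forall>a b. \<chi> (a + b) = \<chi> a * \<chi> b) \<and> (\<forall>a. \<chi> a \<noteq> 0) \<and> (\<forall>a z. (a, z) \<in> F0 \<longrightarrow> \<chi> a = z)"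
proof -
  let ?P = "{F. partial_character F \<and> F0 \<subseteq> F}"
  have upper: "\<exists>U\<in>?P. \<forall>X\<in>C. X \<subseteq> U" if "C \<in> chains ?P" for C
  proof (cases "C = {}")
    case True
    with F0 show ?thesis by (intro bexI[of _ F0]) auto
  next
    case False
    have "chain\<^sub>\<subseteq> C" "\<And>X. X \<in> C \<Longrightarrow> partial_character X \<and> F0 \<subseteq> X"
      using that unfolding chains_def by auto
    with False have "\<Union>C \<in> ?P" using partial_character_Union[of C] by blast
    then show ?thesis by (intro bexI[of _ "\<Union>C"]) auto
  qed
  have "\<exists>M\<in>?P. \<forall>X\<in>?P. M \<subseteq> X \<longrightarrow> X = M"
    by (rule Zorn_Lemma2) (use upper in blast)
  then obtain M where "M \<in> ?P" and maximal: "\<forall>X\<in>?P. M \<subseteq> X \<longrightarrow> X = M" ..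
  then have M: "partial_character M" "F0 \<subseteq> M" by auto
  have total: "g \<in> fst ` M" for g
  proof (rule ccontr)
    assume "g \<notin> fst ` M"
    then obtain M' where "partial_character M'" "M \<subset> M'"
      using partial_character_extend[OF M(1)] by blast
    with maximal M(2) show False by blast
  qed
  define \<chi> where "\<chi> g = (THE z. (g, z) \<in> M)" for g
  have \<chi>_eq: "\<chi> g = z" if "(g, z) \<in> M" for g z
    unfolding \<chi>_def using that partial_character_unique[OF M(1) _ that] by (rule the_equality)
  have \<chi>: "(g, \<chi> g) \<in> M" for g
  proof -
    obtain z where "(g, z) \<in> M" using total[of g] by force
    with \<chi>_eq show ?thesis by simp
  qed
  show ?thesis
  proof (intro exI conjI allI impI)
    show "\<chi> (a + b) = \<chi> a * \<chi> b" for a b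
      using \<chi>_eq partial_character_mult[OF M(1) \<chi> \<chi>] by blast
    show "\<chi> a \<noteq> 0" for a
      using partial_character_nonzero[OF M(1) \<chi>] .
    show "\<chi> a = z" if "(a, z) \<in> F0" for a z
      using that M(2) \<chi>_eq by blast
  qed
qed

lemma character_with_value_minus_one:
  fixes h :: "'g::ab_group_add"
  assumes "h \<noteq> 0" "h + h = 0"
  shows "\<exists>\<chi>. (\<forall>a b. \<chi> (a + b) = \<chi> a * \<chi> b) \<and> (\<forall>a. \<chi> a \<noteq> (0::complex)) \<and> \<chi> h = -1"
proof -
  have "- h = h" using assms(2) by (rule minus_unique)
  then have "partial_character {(0, 1), (h, -1)}"
    using assms by (auto simp: partial_character_def)
  from partial_character_extends[OF this] show ?thesis by blast
qed


section \<open>Direct sum decompositions of a real vector space\<close>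

locale decomposition =
  fixes V :: "'i \<Rightarrow> 'b::real_vector set"
  assumes subspace_component: "subspace (V i)"
    and unique_decomposition:
      "\<exists>!f. (\<forall>i. f i \<in> V i) \<and> finite {i. f i \<noteq> 0} \<and> x = (\<Sum>i | f i \<noteq> 0. f i)"
begin

lemmas component_0 = subspace_0[OF subspace_component]
  and component_add = subspace_add[OF subspace_component]
  and component_scale = subspace_scale[OF subspace_component]
  and component_minus = subspace_neg[OF subspace_component]

definition proj :: "'b \<Rightarrow> 'i \<Rightarrow> 'b" where
  "proj x = (THE f. (\<forall>i. f i \<in> V i) \<and> finite {i. f i \<noteq> 0} \<and> x = (\<Sum>i | f i \<noteq> 0. f i))"

lemma proj_decomposes:
  "(\<forall>i. proj x i \<in> V i) \<and> finite {i. proj x i \<noteq> 0} \<and> x = (\<Sum>i | proj x i \<noteq> 0. proj x i)"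
  unfolding proj_def by (fact theI'[OF unique_decomposition])

lemma proj_in [simp]: "proj x i \<in> V i"
  using proj_decomposes by blast

lemma finite_proj_support [simp]: "finite {i. proj x i \<noteq> 0}"
  using proj_decomposes by blast

lemma sum_proj_superset:
  assumes "finite F" "{i. proj x i \<noteq> 0} \<subseteq> F"
  shows "(\<Sum>i\<in>F. proj x i) = x"
proof -
  have "(\<Sum>i\<in>F. proj x i) = (\<Sum>i | proj x i \<noteq> 0. proj x i)"
    by (rule sum.mono_neutral_right) (use assms in auto)
  also have "\<dots> = x" using proj_decomposes by metis
  finally show ?thesis .
qed

lemma sum_proj: "(\<Sum>i | proj x i \<noteq> 0. proj x i) = x"
  by (rule sum_proj_superset) simp_all

lemma proj_eqI:
  assumes "\<And>i. f i \<in> V i" "finite F" "{i. f i \<noteq> 0} \<subseteq> F" "x = sum f F"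
  shows "proj x = f"
proof -
  have fin: "finite {i. f i \<noteq> 0}" using assms(2,3) finite_subset by blast
  have "sum f F = (\<Sum>i | f i \<noteq> 0. f i)"
    by (rule sum.mono_neutral_right) (use assms in auto)
  with assms fin have "(\<forall>i. f i \<in> V i) \<and> finite {i. f i \<noteq> 0} \<and> x = (\<Sum>i | f i \<noteq> 0. f i)"
    by simp
  with proj_decomposes[of x] unique_decomposition[of x] show ?thesis by blast
qed

lemma proj_add: "proj (x + y) i = proj x i + proj y i"
proof -
  let ?F = "{i. proj x i \<noteq> 0} \<union> {i. proj y i \<noteq> 0}"
  have "proj (x + y) = (\<lambda>i. proj x i + proj y i)"
  proof (rule proj_eqI[where F = ?F])
    show "x + y = (\<Sum>i\<in>?F. proj x i + proj y i)"
      by (simp add: sum.distrib sum_proj_superset)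
  qed (auto intro: component_add)
  then show ?thesis by simp
qed

lemma proj_scale: "proj (r *\<^sub>R x) i = r *\<^sub>R proj x i"
proof -
  let ?F = "{i. proj x i \<noteq> 0}"
  have "proj (r *\<^sub>R x) = (\<lambda>i. r *\<^sub>R proj x i)"
  proof (rule proj_eqI[where F = ?F])
    show "r *\<^sub>R x = (\<Sum>i\<in>?F. r *\<^sub>R proj x i)"
      by (simp add: scaleR_sum_right[symmetric] sum_proj)
  qed (auto intro: component_scale)
  then show ?thesis by simp
qed

lemma linear_proj: "linear (\<lambda>x. proj x i)"
  by (intro linearI) (simp_all add: proj_add proj_scale)

lemma proj_homogeneous: "x \<in> V i \<Longrightarrow> proj x = (\<lambda>j. if j = i then x else 0)"
  by (rule proj_eqI[where F = "{i}"]) (auto simp: component_0)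

lemma proj_homogeneous_same: "x \<in> V i \<Longrightarrow> proj x i = x"
  using proj_homogeneous[of x i] by simp

lemma proj_homogeneous_other: "x \<in> V i \<Longrightarrow> j \<noteq> i \<Longrightarrow> proj x j = 0"
  using proj_homogeneous[of x i] by simp

lemma components_disjoint: "i \<noteq> j \<Longrightarrow> x \<in> V i \<Longrightarrow> x \<in> V j \<Longrightarrow> x = 0"
  using proj_homogeneous_same[of x i] proj_homogeneous_other[of x j i] by simp

lemma proj_inject:
  assumes "\<And>i. proj x i = proj y i"
  shows "x = y"
proof -
  have "x = (\<Sum>i | proj x i \<noteq> 0. proj x i)" by (rule sum_proj[symmetric])
  also have "\<dots> = (\<Sum>i | proj y i \<noteq> 0. proj y i)" by (simp add: assms)
  also have "\<dots> = y" by (rule sum_proj)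
  finally show ?thesis .
qed

lemma linear_eqI_homogeneous:
  assumes "linear f" "linear g" "\<And>i x. x \<in> V i \<Longrightarrow> f x = g x"
  shows "f = g"
proof
  fix x
  have "f x = (\<Sum>i | proj x i \<noteq> 0. f (proj x i))"
    using linear_sum[OF assms(1)] sum_proj[of x] by metis
  also have "\<dots> = (\<Sum>i | proj x i \<noteq> 0. g (proj x i))"
    by (rule sum.cong[OF refl], rule assms(3), rule proj_in)
  also have "\<dots> = g x"
    using linear_sum[OF assms(2)] sum_proj[of x] by metis
  finally show "f x = g x" .
qed

lemma bilinear_sum_proj:
  assumes "\<And>x. linear (H x)" "\<And>y. linear (\<lambda>x. H x y)"
  shows "H x y = (\<Sum>i | proj x i \<noteq> 0. \<Sum>j | proj y j \<noteq> 0. H (proj x i) (proj y j))"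
proof -
  have "H x y = H (\<Sum>i | proj x i \<noteq> 0. proj x i) y" by (simp only: sum_proj)
  also have "\<dots> = (\<Sum>i | proj x i \<noteq> 0. H (proj x i) y)" by (rule linear_sum[OF assms(2)])
  also have "\<dots> = (\<Sum>i | proj x i \<noteq> 0. H (proj x i) (\<Sum>j | proj y j \<noteq> 0. proj y j))"
    by (simp only: sum_proj)
  also have "\<dots> = (\<Sum>i | proj x i \<noteq> 0. \<Sum>j | proj y j \<noteq> 0. H (proj x i) (proj y j))"
    by (rule sum.cong[OF refl], rule linear_sum[OF assms(1)])
  finally show ?thesis .
qed

lemma bilinear_eqI_homogeneous:
  assumes "\<And>x. linear (F x)" "\<And>y. linear (\<lambda>x. F x y)"
    and "\<And>x. linear (G x)" "\<And>y. linear (\<lambda>x. G x y)"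
    and "\<And>i j x y. x \<in> V i \<Longrightarrow> y \<in> V j \<Longrightarrow> F x y = G x y"
  shows "F x y = G x y"
  using bilinear_sum_proj[of F x y, OF assms(1,2)] bilinear_sum_proj[of G x y, OF assms(3,4)]
  by (simp add: assms(5)[OF proj_in proj_in])

lemma proj_reindexed:
  assumes inj: "inj_on \<iota> I"
    and f: "\<forall>j. j \<notin> \<iota> ` I \<longrightarrow> f j = 0" "\<forall>i\<in>I. f (\<iota> i) \<in> V i" "finite {j. f j \<noteq> 0}"
      "x = (\<Sum>j | f j \<noteq> 0. f j)"
  shows "proj x = (\<lambda>i. if i \<in> I then f (\<iota> i) else 0)"
proof (rule proj_eqI)
  let ?S = "{i \<in> I. f (\<iota> i) \<noteq> 0}"
  have supp: "{j. f j \<noteq> 0} = \<iota> ` ?S" using f(1) by auto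
  have inj_S: "inj_on \<iota> ?S" using inj by (rule inj_on_subset) blast
  show "finite ?S" using f(3) supp finite_image_iff[OF inj_S] by simp
  show "(if i \<in> I then f (\<iota> i) else 0) \<in> V i" for i
    using f(2) component_0 by simp
  show "{i. (if i \<in> I then f (\<iota> i) else 0) \<noteq> 0} \<subseteq> ?S" by auto
  have "x = (\<Sum>i\<in>?S. f (\<iota> i))" using f(4) by (simp add: supp sum.reindex[OF inj_S])
  then show "x = (\<Sum>i\<in>?S. if i \<in> I then f (\<iota> i) else 0)" by simp
qed

lemma unique_decomposition_reindex:
  assumes inj: "inj_on \<iota> I" and x: "\<And>i. i \<notin> I \<Longrightarrow> proj x i = 0"
  shows "\<exists>!f. (\<forall>j. j \<notin> \<iota> ` I \<longrightarrow> f j = 0) \<and> (\<forall>i\<in>I. f (\<iota> i) \<in> V i)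
           \<and> finite {j. f j \<noteq> 0} \<and> x = (\<Sum>j | f j \<noteq> 0. f j)"
proof
  define f where "f j = (if j \<in> \<iota> ` I then proj x (the_inv_into I \<iota> j) else 0)" for j
  have f_\<iota>: "f (\<iota> i) = proj x i" if "i \<in> I" for i
    using that inj by (simp add: f_def the_inv_into_f_f)
  have supp_x: "{i. proj x i \<noteq> 0} \<subseteq> I" using x by blast
  have supp: "{j. f j \<noteq> 0} = \<iota> ` {i. proj x i \<noteq> 0}"
  proof
    show "{j. f j \<noteq> 0} \<subseteq> \<iota> ` {i. proj x i \<noteq> 0}"
    proof
      fix j assume j: "j \<in> {j. f j \<noteq> 0}"
      then obtain i where "i \<in> I" "j = \<iota> i" by (auto simp: f_def split: if_splits)
      with j f_\<iota> show "j \<in> \<iota> ` {i. proj x i \<noteq> 0}" by auto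
    qed
    show "\<iota> ` {i. proj x i \<noteq> 0} \<subseteq> {j. f j \<noteq> 0}" using supp_x f_\<iota> by auto
  qed
  have inj_supp: "inj_on \<iota> {i. proj x i \<noteq> 0}" using inj supp_x by (rule inj_on_subset)
  show "(\<forall>j. j \<notin> \<iota> ` I \<longrightarrow> f j = 0) \<and> (\<forall>i\<in>I. f (\<iota> i) \<in> V i)
      \<and> finite {j. f j \<noteq> 0} \<and> x = (\<Sum>j | f j \<noteq> 0. f j)"
  proof (intro conjI)
    show "x = (\<Sum>j | f j \<noteq> 0. f j)"
      using supp_x by (simp add: supp sum.reindex[OF inj_supp] f_\<iota> sum_proj subset_iff)
    show "finite {j. f j \<noteq> 0}" by (simp add: supp)
    show "\<forall>i\<in>I. f (\<iota> i) \<in> V i" by (simp add: f_\<iota>)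
  qed (simp add: f_def)
  fix f' assume f': "(\<forall>j. j \<notin> \<iota> ` I \<longrightarrow> f' j = 0) \<and> (\<forall>i\<in>I. f' (\<iota> i) \<in> V i)
      \<and> finite {j. f' j \<noteq> 0} \<and> x = (\<Sum>j | f' j \<noteq> 0. f' j)"
  with proj_reindexed[OF inj] have proj_x: "proj x = (\<lambda>i. if i \<in> I then f' (\<iota> i) else 0)"
    by blast
  show "f' = f"
  proof
    fix j show "f' j = f j"
    proof (cases "j \<in> \<iota> ` I")
      case True
      then obtain i where "i \<in> I" "j = \<iota> i" by blast
      then show ?thesis using f_\<iota>[of i] by (simp add: proj_x)
    next
      case False
      then show ?thesis using f' by (simp add: f_def)
    qed
  qed
qed

definition blockwise :: "('i \<Rightarrow> 'b \<Rightarrow> 'b) \<Rightarrow> 'b \<Rightarrow> 'b" where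
  "blockwise T x = (\<Sum>i | proj x i \<noteq> 0. T i (proj x i))"

context
  fixes T :: "'i \<Rightarrow> 'b \<Rightarrow> 'b"
  assumes linear_T: "\<And>i. linear (T i)"
begin

lemma blockwise_superset:
  assumes "finite F" "{i. proj x i \<noteq> 0} \<subseteq> F"
  shows "blockwise T x = (\<Sum>i\<in>F. T i (proj x i))"
  unfolding blockwise_def
  by (rule sum.mono_neutral_left) (use assms linear_0[OF linear_T] in auto)

lemma linear_blockwise: "linear (blockwise T)"
proof (rule linearI)
  fix x y
  let ?F = "{i. proj x i \<noteq> 0} \<union> {i. proj y i \<noteq> 0}"
  have "?F \<supseteq> {i. proj (x + y) i \<noteq> 0}" by (auto simp: proj_add)
  then show "blockwise T (x + y) = blockwise T x + blockwise T y"
    by (simp add: blockwise_superset[of ?F] proj_add linear_add[OF linear_T] sum.distrib)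
next
  fix r x
  let ?F = "{i. proj x i \<noteq> 0}"
  have "?F \<supseteq> {i. proj (r *\<^sub>R x) i \<noteq> 0}" by (auto simp: proj_scale)
  then show "blockwise T (r *\<^sub>R x) = r *\<^sub>R blockwise T x"
    by (simp add: blockwise_superset[of ?F] proj_scale linear_scale[OF linear_T] scaleR_sum_right)
qed

lemma blockwise_homogeneous: "x \<in> V i \<Longrightarrow> blockwise T x = T i x"
  using proj_homogeneous[of x i] by (subst blockwise_superset[of "{i}"]) auto

lemma proj_blockwise:
  assumes "\<And>i y. y \<in> V i \<Longrightarrow> T i y \<in> V i"
  shows "proj (blockwise T x) i = T i (proj x i)"
proof -
  have "proj (blockwise T x) = (\<lambda>i. T i (proj x i))"
  proof (rule proj_eqI[where F = "{i. proj x i \<noteq> 0}"])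
    show "T i (proj x i) \<in> V i" for i by (rule assms) (rule proj_in)
    show "{i. T i (proj x i) \<noteq> 0} \<subseteq> {i. proj x i \<noteq> 0}"
    proof
      fix i assume "i \<in> {i. T i (proj x i) \<noteq> 0}"
      then show "i \<in> {i. proj x i \<noteq> 0}" using linear_0[OF linear_T, of i] by auto
    qed
    show "blockwise T x = (\<Sum>i | proj x i \<noteq> 0. T i (proj x i))"
      by (fact blockwise_def)
  qed (rule finite_proj_support)
  then show ?thesis by (rule fun_cong)
qed

end

end


section \<open>Complex algebras as real algebras\<close>

lemma subspace_linear_preimage: "linear f \<Longrightarrow> subspace S \<Longrightarrow> subspace {x. f x \<in> S}"
  by (auto simp: subspace_def linear_add linear_scale linear_0)

locale complex_algebra =
  fixes J :: "'b::real_vector \<Rightarrow> 'b" and m :: "'b \<Rightarrow> 'b \<Rightarrow> 'b"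
  assumes calg: "calg J m"
begin

lemma linear_J: "linear J"
  using calg by (simp add: calg_def)

lemma J_J [simp]: "J (J x) = - x"
  using calg by (simp add: calg_def)

lemma mult_J_left: "m (J x) y = J (m x y)"
  using calg by (simp add: calg_def)

lemma mult_J_right: "m x (J y) = J (m x y)"
  using calg by (simp add: calg_def)

lemma linear_mult_left: "linear (\<lambda>x. m x y)"
  using calg by (intro linearI) (auto simp: calg_def ralg_def)

lemma linear_mult_right: "linear (m x)"
  using calg by (intro linearI) (auto simp: calg_def ralg_def)

lemmas J_add = linear_add[OF linear_J]
  and J_scale = linear_scale[OF linear_J]
  and J_minus = linear_neg[OF linear_J]
  and J_diff = linear_diff[OF linear_J]
  and mult_add_left = linear_add[OF linear_mult_left]
  and mult_add_right = linear_add[OF linear_mult_right]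
  and mult_scale_left = linear_scale[OF linear_mult_left]
  and mult_scale_right = linear_scale[OF linear_mult_right]

lemma J_0 [simp]: "J 0 = 0"
  by (rule linear_0[OF linear_J])

lemma mult_0_left [simp]: "m 0 y = 0"
  using linear_0[OF linear_mult_left] by simp

lemma mult_0_right [simp]: "m x 0 = 0"
  using linear_0[OF linear_mult_right] by simp

lemma span_J_closed:
  assumes "x \<in> span G" and "\<And>x. x \<in> G \<Longrightarrow> J x \<in> span G"
  shows "J x \<in> span G"
  using assms(1)
proof (induction rule: span_induct)
  case base
  show ?case using subspace_linear_preimage[OF linear_J subspace_span] by simp
qed (use assms(2) in blast)

definition cscale :: "complex \<Rightarrow> 'b \<Rightarrow> 'b" where
  "cscale z x = Re z *\<^sub>R x + Im z *\<^sub>R J x"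

lemma linear_cscale: "linear (cscale z)"
  by (intro linearI) (simp_all add: cscale_def J_add J_scale scaleR_add_right algebra_simps)

lemmas cscale_add = linear_add[OF linear_cscale]
  and cscale_scale = linear_scale[OF linear_cscale]
  and cscale_sum = linear_sum[OF linear_cscale]

lemma cscale_mult: "cscale (z * w) x = cscale z (cscale w x)"
  by (simp add: cscale_def J_add J_scale scaleR_add_right scaleR_add_left scaleR_diff_left
      algebra_simps)

lemma cscale_one [simp]: "cscale 1 x = x"
  by (simp add: cscale_def)

lemma cscale_0_right [simp]: "cscale z 0 = 0"
  by (simp add: cscale_def)

lemma cscale_diff_left: "cscale (z - w) x = cscale z x - cscale w x"
  by (simp add: cscale_def scaleR_diff_left)

lemma cscale_ii: "cscale \<i> x = J x"
  by (simp add: cscale_def)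

lemma cscale_of_real: "cscale (of_real r) x = r *\<^sub>R x"
  by (simp add: cscale_def)

lemma cscale_minus: "cscale (- z) x = - cscale z x"
  by (simp add: cscale_def)

lemma cscale_J: "cscale z (J x) = J (cscale z x)"
  by (simp add: cscale_def J_add J_scale)

lemma cscale_inverse: "z \<noteq> 0 \<Longrightarrow> cscale (inverse z) (cscale z x) = x"
  by (simp flip: cscale_mult)

lemma cscale_eq_0_iff: "z \<noteq> 0 \<Longrightarrow> cscale z x = 0 \<longleftrightarrow> x = 0"
  by (metis cscale_inverse linear_0[OF linear_cscale])

lemma mult_cscale_left: "m (cscale z x) y = cscale z (m x y)"
  by (simp add: cscale_def mult_add_left mult_scale_left mult_J_left)

lemma mult_cscale_right: "m x (cscale z y) = cscale z (m x y)"
  by (simp add: cscale_def mult_add_right mult_scale_right mult_J_right)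

lemma cscale_in_rcentroid: "cscale z \<in> rcentroid UNIV m"
  by (simp add: rcentroid_def lin_on_def cscale_add cscale_scale mult_cscale_left mult_cscale_right)

end

locale simple_complex_algebra = complex_algebra +
  assumes csimple: "csimple J m"
begin

lemma nontrivial_product: "\<exists>x y. m x y \<noteq> 0"
  using csimple by (simp add: csimple_def)

lemma cideal_trivial: "cideal J m I \<Longrightarrow> I = {0} \<or> I = UNIV"
  using csimple by (simp add: csimple_def)

lemma span_products: "span {m x y | x y. True} = UNIV"
proof -
  let ?L = "span {m x y | x y. True}"
  have prod: "m x y \<in> ?L" for x y by (rule span_base) blast
  have "J x \<in> ?L" if "x \<in> ?L" for x
  proof (rule span_J_closed[OF that])
    fix x assume "x \<in> {m x y | x y. True}"
    then obtain a b where "x = m a b" by blast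
    then show "J x \<in> ?L" using prod[of "J a" b] by (simp add: mult_J_left)
  qed
  with prod have "cideal J m ?L" by (auto simp: cideal_def rideal_def)
  moreover have "?L \<noteq> {0}" using nontrivial_product prod by blast
  ultimately show ?thesis using cideal_trivial by blast
qed

lemma annihilator_trivial:
  assumes "\<And>b. m b x = 0 \<and> m x b = 0"
  shows "x = 0"
proof -
  define Ann where "Ann = {x. \<forall>b. m b x = 0 \<and> m x b = 0}"
  have "subspace Ann" unfolding Ann_def
    by (rule subspaceI) (simp_all add: mult_add_left mult_add_right mult_scale_left mult_scale_right)
  then have "cideal J m Ann"
    by (auto simp: cideal_def rideal_def Ann_def mult_J_left mult_J_right)
  moreover have "Ann \<noteq> UNIV" using nontrivial_product unfolding Ann_def by auto
  moreover have "x \<in> Ann" using assms unfolding Ann_def by blast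
  ultimately show ?thesis using cideal_trivial by blast
qed

text \<open>A real ideal \<open>I\<close> is not necessarily \<open>J\<close>-stable, but \<open>B I + I B\<close> is, and either this
  ideal is everything or \<open>I\<close> lies in the annihilator.\<close>

lemma rideal_trivial:
  assumes I: "rideal UNIV m I"
  shows "I = {0} \<or> I = UNIV"
proof -
  have sI: "subspace I" and idl: "\<And>x y. y \<in> I \<Longrightarrow> m x y \<in> I \<and> m y x \<in> I"
    using I by (auto simp: rideal_def)
  define G where "G = {m b i | b i. i \<in> I} \<union> {m i b | b i. i \<in> I}"
  define K where "K = span G"
  have "G \<subseteq> I" using idl unfolding G_def by blast
  then have KI: "K \<subseteq> I" unfolding K_def using span_minimal[OF _ sI] by blast
  have K_ideal: "m x y \<in> K \<and> m y x \<in> K" if "y \<in> K" for x y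
    using that unfolding K_def
  proof (induction rule: span_induct)
    case base
    have "subspace {y. m x y \<in> span G}" "subspace {y. m y x \<in> span G}"
      by (rule subspace_linear_preimage[OF linear_mult_right subspace_span],
          rule subspace_linear_preimage[OF linear_mult_left subspace_span])
    then show ?case using subspace_inter by (simp add: Collect_conj_eq)
  next
    case (step y)
    then obtain b i where "i \<in> I" and "y = m b i \<or> y = m i b" unfolding G_def by blast
    with idl have "m x y \<in> G" "m y x \<in> G" unfolding G_def by blast+
    then show ?case by (simp add: span_base)
  qed
  have K_J: "J x \<in> K" if "x \<in> K" for x
    using that unfolding K_def
  proof (rule span_J_closed)
    fix x assume "x \<in> G"
    then obtain b i where "i \<in> I" and "x = m b i \<or> x = m i b" unfolding G_def by blast
    then have "J x = m (J b) i \<or> J x = m i (J b)" by (auto simp: mult_J_left mult_J_right)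
    with \<open>i \<in> I\<close> have "J x \<in> G" unfolding G_def by blast
    then show "J x \<in> span G" by (rule span_base)
  qed
  have "cideal J m K"
    using K_ideal K_J by (auto simp: cideal_def rideal_def K_def)
  then consider "K = UNIV" | "K = {0}" using cideal_trivial by blast
  then show ?thesis
  proof cases
    case 1
    with KI show ?thesis by blast
  next
    case 2
    have "I \<subseteq> {0}"
    proof
      fix i assume "i \<in> I"
      then have "m b i \<in> K" "m i b \<in> K" for b
        unfolding K_def G_def by (blast intro: span_base)+
      with 2 show "i \<in> {0}" using annihilator_trivial by blast
    qed
    then show ?thesis using subspace_0[OF sI] by blast
  qed
qed

lemma rcentroid_commutes_J:
  assumes c: "c \<in> rcentroid UNIV m"
  shows "c (J x) = J (c x)"
proof -
  have lc: "linear c" using c by (intro linearI) (auto simp: rcentroid_def lin_on_def)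
  have cm: "c (m a b) = m a (c b)" for a b using c unfolding rcentroid_def by blast
  have "x \<in> span {m x y | x y. True}" using span_products by simp
  then show ?thesis
  proof (induction rule: span_induct)
    case base
    have "linear (\<lambda>x. c (J x) - J (c x))"
      using lc linear_J by (intro linearI) (auto simp: linear_add linear_scale algebra_simps)
    from subspace_linear_preimage[OF this subspace_single_0] show ?case by simp
  next
    case (step x)
    then obtain a b where x: "x = m a b" by blast
    have "c (J (m a b)) = m (J a) (c b)" by (simp add: cm flip: mult_J_left)
    also have "\<dots> = J (c (m a b))" by (simp add: cm mult_J_left)
    finally show ?case using x by simp
  qed
qed

end

locale central_simple_complex_algebra = simple_complex_algebra +
  assumes ccentroid_scalars: "c \<in> ccentroid J m \<Longrightarrow> \<exists>a b. c = (\<lambda>x. a *\<^sub>R x + b *\<^sub>R J x)"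
begin

lemma rcentroid_eq: "rcentroid UNIV m = range cscale"
proof
  show "rcentroid UNIV m \<subseteq> range cscale"
  proof
    fix c assume c: "c \<in> rcentroid UNIV m"
    have "linear c" using c by (intro linearI) (auto simp: rcentroid_def lin_on_def)
    then have "c \<in> ccentroid J m"
      unfolding ccentroid_def using rcentroid_commutes_J[OF c] c[unfolded rcentroid_def] by blast
    then obtain a b where "c = (\<lambda>x. a *\<^sub>R x + b *\<^sub>R J x)" using ccentroid_scalars by blast
    then have "c = cscale (Complex a b)" by (simp add: cscale_def fun_eq_iff)
    then show "c \<in> range cscale" by blast
  qed
qed (auto intro: cscale_in_rcentroid)

end


section \<open>Gradings of a central simple complex algebra\<close>

locale graded_complex_algebra = central_simple_complex_algebra J m + decomposition V
  for J :: "'b::real_vector \<Rightarrow> 'b" and m and V :: "'g::ab_group_add \<Rightarrow> 'b set" +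
  assumes mult_component: "x \<in> V a \<Longrightarrow> y \<in> V b \<Longrightarrow> m x y \<in> V (a + b)"
begin

lemma proj_mult_left:
  assumes y: "y \<in> V a"
  shows "proj (m y w) c = m y (proj w (c - a))"
proof -
  have "proj (m y w) c = (\<Sum>b | proj w b \<noteq> 0. proj (m y (proj w b)) c)"
    using linear_sum[OF linear_mult_right, of y "proj w"] sum_proj[of w]
      linear_sum[OF linear_proj] by metis
  also have "\<dots> = (\<Sum>b | proj w b \<noteq> 0. if b = c - a then m y (proj w b) else 0)"
    by (rule sum.cong[OF refl])
      (auto simp: proj_homogeneous[OF mult_component[OF y proj_in]] algebra_simps)
  also have "\<dots> = m y (proj w (c - a))" by (simp add: sum.delta')
  finally show ?thesis .
qed

lemma proj_mult_right:
  assumes z: "z \<in> V b"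
  shows "proj (m w z) c = m (proj w (c - b)) z"
proof -
  have "proj (m w z) c = (\<Sum>a | proj w a \<noteq> 0. proj (m (proj w a) z) c)"
    using linear_sum[OF linear_mult_left, of "proj w" _ z] sum_proj[of w]
      linear_sum[OF linear_proj] by metis
  also have "\<dots> = (\<Sum>a | proj w a \<noteq> 0. if a = c - b then m (proj w a) z else 0)"
    by (rule sum.cong[OF refl])
      (auto simp: proj_homogeneous[OF mult_component[OF proj_in z]] algebra_simps)
  also have "\<dots> = m (proj w (c - b)) z" by (simp add: sum.delta')
  finally show ?thesis .
qed

lemma proj_mult: "proj (m x y) k = (\<Sum>a | proj x a \<noteq> 0. m (proj x a) (proj y (k - a)))"
proof -
  have "proj (m x y) k = (\<Sum>a | proj x a \<noteq> 0. proj (m (proj x a) y) k)"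
    using linear_sum[OF linear_mult_left, of "proj x" _ y] sum_proj[of x]
      linear_sum[OF linear_proj] by metis
  also have "\<dots> = (\<Sum>a | proj x a \<noteq> 0. m (proj x a) (proj y (k - a)))"
    by (rule sum.cong[OF refl], rule proj_mult_left, rule proj_in)
  finally show ?thesis .
qed

lemma exists_nonzero_homogeneous: "\<exists>g x. x \<in> V g \<and> x \<noteq> 0"
proof -
  obtain a b where "m a b \<noteq> 0" using nontrivial_product by blast
  then have "a \<noteq> 0" by auto
  then obtain g where "proj a g \<noteq> 0" using sum_proj[of a] by force
  then show ?thesis using proj_in by blast
qed

text \<open>The homogeneous component of degree \<open>k\<close> of \<open>J\<close>, viewed as an element of the centroid.\<close>

definition J_component :: "'g \<Rightarrow> 'b \<Rightarrow> 'b" where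
  "J_component k = blockwise (\<lambda>g y. proj (J y) (g + k))"

lemma linear_J_component: "linear (J_component k)"
  unfolding J_component_def
  by (rule linear_blockwise) (rule linear_compose[OF linear_J linear_proj, unfolded o_def])

lemma J_component_homogeneous: "y \<in> V a \<Longrightarrow> J_component k y = proj (J y) (a + k)"
  unfolding J_component_def
  by (rule blockwise_homogeneous) (rule linear_compose[OF linear_J linear_proj, unfolded o_def])

lemma J_component_in_rcentroid: "J_component k \<in> rcentroid UNIV m"
proof -
  have lin: "linear (J_component k)" by (rule linear_J_component)
  have bilinear: "linear (\<lambda>x. J_component k (m x y))" "linear (\<lambda>y. J_component k (m x y))"
    "linear (\<lambda>x. m (J_component k x) y)" "linear (\<lambda>y. m x (J_component k y))"
    "linear (\<lambda>y. m (J_component k x) y)" "linear (\<lambda>x. m x (J_component k y))" for x y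
    using linear_compose[OF linear_mult_left lin] linear_compose[OF linear_mult_right lin]
      linear_compose[OF lin linear_mult_left] linear_compose[OF lin linear_mult_right]
      linear_mult_left linear_mult_right
    by (simp_all add: o_def)
  have left: "J_component k (m x y) = m (J_component k x) y" for x y
  proof (rule bilinear_eqI_homogeneous[where F = "\<lambda>x y. J_component k (m x y)"])
    fix a b x y assume x: "x \<in> V a" and y: "y \<in> V b"
    have "J_component k (m x y) = proj (m (J x) y) (a + b + k)"
      by (simp add: J_component_homogeneous[OF mult_component[OF x y]] mult_J_left)
    also have "\<dots> = m (proj (J x) (a + k)) y"
      by (simp add: proj_mult_right[OF y] algebra_simps)
    finally show "J_component k (m x y) = m (J_component k x) y"
      by (simp add: J_component_homogeneous[OF x])
  qed (use bilinear in simp_all)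
  have right: "J_component k (m x y) = m x (J_component k y)" for x y
  proof (rule bilinear_eqI_homogeneous[where F = "\<lambda>x y. J_component k (m x y)"])
    fix a b x y assume x: "x \<in> V a" and y: "y \<in> V b"
    have "J_component k (m x y) = proj (m x (J y)) (a + b + k)"
      by (simp add: J_component_homogeneous[OF mult_component[OF x y]] mult_J_right)
    also have "\<dots> = m x (proj (J y) (b + k))"
      by (simp add: proj_mult_left[OF x] algebra_simps)
    finally show "J_component k (m x y) = m x (J_component k y)"
      by (simp add: J_component_homogeneous[OF y])
  qed (use bilinear in simp_all)
  show ?thesis
    using left right linear_add[OF lin] linear_scale[OF lin] by (simp add: rcentroid_def lin_on_def)
qed

text \<open>Normalizing \<open>z\<close> to \<open>w = z / Im z\<close> gives \<open>Im w = 1\<close>, so \<open>T = cscale w\<close> satisfies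
  \<open>T\<^sup>2 = 2 Re w T - (1 + Re w\<^sup>2)\<close>; comparing the components of \<open>T\<^sup>2 x\<close> for homogeneous
  \<open>x \<noteq> 0\<close> forces \<open>2k = 0\<close> and \<open>Re w = 0\<close>.\<close>

lemma shifting_scalar_is_imaginary:
  assumes shift: "\<And>g y. y \<in> V g \<Longrightarrow> cscale z y \<in> V (g + k)"
    and "k \<noteq> 0" "z \<noteq> 0"
  shows "Re z = 0 \<and> k + k = 0"
proof -
  obtain a x where x: "x \<in> V a" "x \<noteq> 0" using exists_nonzero_homogeneous by blast
  have "Im z \<noteq> 0"
  proof
    assume "Im z = 0"
    then have "cscale z x = Re z *\<^sub>R x" by (simp add: cscale_def)
    then have "cscale z x \<in> V a" "cscale z x \<in> V (a + k)"
      using shift[OF x(1)] component_scale[OF x(1)] by simp_all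
    moreover have "a + k \<noteq> a" using \<open>k \<noteq> 0\<close> by simp
    ultimately have "cscale z x = 0" using components_disjoint by blast
    with \<open>z \<noteq> 0\<close> x(2) show False by (simp add: cscale_eq_0_iff)
  qed
  define w where "w = of_real (1 / Im z) * z"
  have "w \<noteq> 0" using \<open>z \<noteq> 0\<close> \<open>Im z \<noteq> 0\<close> by (simp add: w_def)
  have "Im w = 1" using \<open>Im z \<noteq> 0\<close> by (simp add: w_def)
  have T_shift: "cscale w y \<in> V (g + k)" if "y \<in> V g" for g y
  proof -
    have "cscale w y = (1 / Im z) *\<^sub>R cscale z y"
      unfolding w_def by (simp only: cscale_mult cscale_of_real)
    then show ?thesis using component_scale[OF shift[OF that]] by simp
  qed
  have "w * w = of_real (2 * Re w) * w - of_real (1 + (Re w)\<^sup>2)"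
    using \<open>Im w = 1\<close> by (simp add: complex_eq_iff power2_eq_square)
  then have "cscale w (cscale w x) = cscale (of_real (2 * Re w) * w - of_real (1 + (Re w)\<^sup>2)) x"
    by (simp flip: cscale_mult)
  then have square: "cscale w (cscale w x) = (2 * Re w) *\<^sub>R cscale w x - (1 + (Re w)\<^sup>2) *\<^sub>R x"
    by (simp only: cscale_diff_left cscale_mult cscale_of_real)
  have Tx: "cscale w x \<in> V (a + k)" and TTx: "cscale w (cscale w x) \<in> V (a + k + k)"
    using T_shift[OF x(1)] T_shift[OF T_shift[OF x(1)]] by simp_all
  have pos: "1 + (Re w)\<^sup>2 \<noteq> 0" using zero_le_power2[of "Re w"] by linarith
  have proj_square: "proj (cscale w (cscale w x)) c
      = (2 * Re w) *\<^sub>R proj (cscale w x) c - (1 + (Re w)\<^sup>2) *\<^sub>R proj x c" for c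
    by (simp add: square linear_diff[OF linear_proj] proj_scale)
  have "k + k = 0"
  proof (rule ccontr)
    assume "k + k \<noteq> 0"
    then have "proj (cscale w (cscale w x)) a = 0"
      using proj_homogeneous_other[OF TTx] by (simp add: add.assoc)
    moreover have "proj (cscale w x) a = 0" using proj_homogeneous_other[OF Tx] \<open>k \<noteq> 0\<close> by simp
    ultimately have "(1 + (Re w)\<^sup>2) *\<^sub>R x = 0"
      using proj_square[of a] proj_homogeneous_same[OF x(1)] by simp
    with pos x(2) show False by simp
  qed
  moreover have "Re w = 0"
  proof -
    have "proj (cscale w (cscale w x)) (a + k) = 0"
      using proj_homogeneous_other[OF TTx] \<open>k \<noteq> 0\<close> \<open>k + k = 0\<close> by (simp add: add.assoc)
    moreover have "proj x (a + k) = 0" using proj_homogeneous_other[OF x(1)] \<open>k \<noteq> 0\<close> by simp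
    ultimately have "(2 * Re w) *\<^sub>R cscale w x = 0"
      using proj_square[of "a + k"] proj_homogeneous_same[OF Tx] by simp
    with \<open>w \<noteq> 0\<close> x(2) show ?thesis by (simp add: cscale_eq_0_iff)
  qed
  then have "Re z = 0" using \<open>Im z \<noteq> 0\<close> by (simp add: w_def)
  ultimately show ?thesis by simp
qed

lemma J_homogeneous_of_order_two_degree:
  assumes "\<not> (\<forall>g. J ` V g \<subseteq> V g)"
  shows "\<exists>h. h \<noteq> 0 \<and> h + h = 0 \<and> (\<forall>g y. y \<in> V g \<longrightarrow> J y \<in> V (g + h))"
proof -
  from assms obtain a x where x: "x \<in> V a" and Jx: "J x \<notin> V a" by blast
  have "\<exists>k. k \<noteq> 0 \<and> proj (J x) (a + k) \<noteq> 0"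
  proof (rule ccontr)
    assume none: "\<not> ?thesis"
    have vanish: "proj (J x) g = 0" if "g \<noteq> a" for g
    proof -
      have "g - a \<noteq> 0" using that by simp
      with none have "proj (J x) (a + (g - a)) = 0" by blast
      then show ?thesis by simp
    qed
    have "J x = proj (J x) a"
    proof (rule proj_inject)
      fix g
      show "proj (J x) g = proj (proj (J x) a) g"
        using vanish[of g] proj_homogeneous_same[OF proj_in[of "J x" a]]
          proj_homogeneous_other[OF proj_in[of "J x" a], of g]
        by (cases "g = a") simp_all
    qed
    with Jx show False by (metis proj_in)
  qed
  then obtain k where "k \<noteq> 0" and Jk_x: "proj (J x) (a + k) \<noteq> 0" by blast
  obtain z where z: "J_component k = cscale z"
    using J_component_in_rcentroid rcentroid_eq by blast
  have shift: "cscale z y \<in> V (g + k)" if "y \<in> V g" for g y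
  proof -
    have "cscale z y = proj (J y) (g + k)" using J_component_homogeneous[OF that, of k] z by simp
    then show ?thesis by simp
  qed
  have "z \<noteq> 0"
  proof
    assume "z = 0"
    then have "J_component k x = 0" by (simp add: z cscale_def)
    with Jk_x J_component_homogeneous[OF x, of k] show False by simp
  qed
  from shifting_scalar_is_imaginary[OF shift \<open>k \<noteq> 0\<close> this]
  have "Re z = 0" "k + k = 0" by auto
  have "J y \<in> V (g + k)" if "y \<in> V g" for g y
  proof -
    have "J y = (1 / Im z) *\<^sub>R cscale z y"
      using \<open>Re z = 0\<close> \<open>z \<noteq> 0\<close> by (simp add: cscale_def complex_eq_iff)
    then show ?thesis using component_scale[OF shift[OF that]] by simp
  qed
  with \<open>k \<noteq> 0\<close> \<open>k + k = 0\<close> show ?thesis by blast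
qed

lemma cent_comp_iff: "c \<in> cent_comp m V d \<longleftrightarrow> (\<exists>z. c = cscale z \<and> (\<forall>g. cscale z ` V g \<subseteq> V (d + g)))"
  by (auto simp: cent_comp_def rcentroid_eq)

lemma rcentroid_eq_cent_comp_0:
  assumes "\<forall>g. J ` V g \<subseteq> V g"
  shows "rcentroid UNIV m = cent_comp m V 0"
proof
  show "cent_comp m V 0 \<subseteq> rcentroid UNIV m" by (auto simp: cent_comp_def)
  show "rcentroid UNIV m \<subseteq> cent_comp m V 0"
  proof
    fix c assume c: "c \<in> rcentroid UNIV m"
    then obtain z where "c = cscale z" using rcentroid_eq by blast
    then have "c ` V g \<subseteq> V (0 + g)" for g
      using assms by (auto simp: cscale_def intro!: component_add component_scale)
    with c show "c \<in> cent_comp m V 0" by (simp add: cent_comp_def)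
  qed
qed

end


section \<open>Gradings in which \<open>J\<close> is homogeneous of nonzero degree\<close>

locale J_of_degree = graded_complex_algebra J m V
  for J :: "'b::real_vector \<Rightarrow> 'b" and m and V :: "'g::ab_group_add \<Rightarrow> 'b set" +
  fixes h :: 'g
  assumes h_nonzero: "h \<noteq> 0" and h_order_two: "h + h = 0"
    and J_degree: "y \<in> V g \<Longrightarrow> J y \<in> V (g + h)"
begin

lemma add_h_h [simp]: "g + h + h = g"
  by (simp add: add.assoc h_order_two)

lemma add_h_neq: "g + h \<noteq> g"
  using h_nonzero by simp

lemma proj_cscale_homogeneous:
  assumes x: "x \<in> V g"
  shows "proj (cscale z x) g = Re z *\<^sub>R x" and "proj (cscale z x) (g + h) = Im z *\<^sub>R J x"
proof -
  have Jx: "J x \<in> V (g + h)" by (rule J_degree[OF x])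
  have "proj (cscale z x) = (\<lambda>k. Re z *\<^sub>R proj x k + Im z *\<^sub>R proj (J x) k)"
    by (simp add: cscale_def proj_add proj_scale fun_eq_iff)
  then show "proj (cscale z x) g = Re z *\<^sub>R x" and "proj (cscale z x) (g + h) = Im z *\<^sub>R J x"
    using add_h_neq[of g] by (simp_all add: proj_homogeneous[OF x] proj_homogeneous[OF Jx])
qed

lemma cscale_of_degree:
  assumes shift: "\<And>g. cscale z ` V g \<subseteq> V (d + g)"
  shows "d = 0 \<Longrightarrow> Im z = 0" and "d = h \<Longrightarrow> Re z = 0"
proof -
  obtain g x where x: "x \<in> V g" "x \<noteq> 0" using exists_nonzero_homogeneous by blast
  then have Jx: "J x \<noteq> 0" by (metis J_J J_0 neg_equal_0_iff_equal)
  have cx: "cscale z x \<in> V (d + g)" using shift x(1) by blast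
  show "Im z = 0" if "d = 0"
  proof -
    have "proj (cscale z x) (g + h) = 0"
      using proj_homogeneous_other[OF cx] add_h_neq[of g] that by simp
    with Jx show ?thesis by (simp add: proj_cscale_homogeneous[OF x(1)])
  qed
  show "Re z = 0" if "d = h"
  proof -
    have "proj (cscale z x) g = 0"
      using proj_homogeneous_other[OF cx] add_h_neq[of g] that by (simp add: add.commute)
    with x(2) show ?thesis by (simp add: proj_cscale_homogeneous[OF x(1)])
  qed
qed

lemma cent_comp_0_eq: "cent_comp m V 0 = {(\<lambda>x. r *\<^sub>R x) | r. True}"
proof (intro set_eqI iffI)
  fix c :: "'b \<Rightarrow> 'b" assume "c \<in> cent_comp m V 0"
  then obtain z where c: "c = cscale z" and shift: "\<And>g. cscale z ` V g \<subseteq> V (0 + g)"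
    by (auto simp: cent_comp_iff)
  have "Im z = 0" by (rule cscale_of_degree(1)[OF shift refl])
  then have "c = (\<lambda>x. Re z *\<^sub>R x)" by (simp add: c cscale_def fun_eq_iff)
  then show "c \<in> {(\<lambda>x. r *\<^sub>R x) | r. True}" by blast
next
  fix c :: "'b \<Rightarrow> 'b" assume "c \<in> {(\<lambda>x. r *\<^sub>R x) | r. True}"
  then obtain r where "c = cscale (of_real r)" by (auto simp: cscale_of_real fun_eq_iff)
  moreover have "cscale (of_real r) ` V g \<subseteq> V (0 + g)" for g
    by (auto simp: cscale_of_real component_scale)
  ultimately show "c \<in> cent_comp m V 0" by (auto simp: cent_comp_iff)
qed

lemma cent_comp_h_eq: "cent_comp m V h = {(\<lambda>x. r *\<^sub>R J x) | r. True}"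
proof (intro set_eqI iffI)
  fix c :: "'b \<Rightarrow> 'b" assume "c \<in> cent_comp m V h"
  then obtain z where c: "c = cscale z" and shift: "\<And>g. cscale z ` V g \<subseteq> V (h + g)"
    by (auto simp: cent_comp_iff)
  have "Re z = 0" by (rule cscale_of_degree(2)[OF shift refl])
  then have "c = (\<lambda>x. Im z *\<^sub>R J x)" by (simp add: c cscale_def fun_eq_iff)
  then show "c \<in> {(\<lambda>x. r *\<^sub>R J x) | r. True}" by blast
next
  fix c :: "'b \<Rightarrow> 'b" assume "c \<in> {(\<lambda>x. r *\<^sub>R J x) | r. True}"
  then obtain r where r: "c = (\<lambda>x. r *\<^sub>R J x)" by blast
  then have "c = cscale (Complex 0 r)" by (simp add: cscale_def fun_eq_iff)
  moreover have "cscale (Complex 0 r) ` V g \<subseteq> V (h + g)" for g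
    by (auto simp: cscale_def add.commute intro!: component_scale J_degree)
  ultimately show "c \<in> cent_comp m V h" by (auto simp: cent_comp_iff)
qed

lemma graded_central_simple: "graded_central_simple m V"
  unfolding graded_central_simple_def
proof (intro conjI allI impI)
  show "I = {0} \<or> I = UNIV" if "graded_ideal m V I" for I
    using that rideal_trivial by (simp add: graded_ideal_def)
qed (fact span_products cent_comp_0_eq)+

definition rep :: "'g \<Rightarrow> 'g" where
  "rep g = (SOME k. k \<in> coset h g)"

lemma rep_cases: "rep g = g \<or> rep g = g + h"
proof -
  have "rep g \<in> coset h g" unfolding rep_def by (rule someI[of _ g]) (simp add: coset_def)
  then show ?thesis by (simp add: coset_def)
qed

lemma coset_add_h: "coset h (g + h) = coset h g"
  by (auto simp: coset_def)

lemma rep_add_h [simp]: "rep (g + h) = rep g"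
  by (simp add: rep_def coset_add_h)

lemma rep_rep [simp]: "rep (rep g) = rep g"
  using rep_cases[of g] by auto

lemma coset_rep: "coset h (rep g) = coset h g"
  using rep_cases[of g] coset_add_h by auto

lemma not_rep: "rep g \<noteq> g \<Longrightarrow> g = rep g + h"
  using rep_cases[of g] by auto

lemma rep_add_h_iff: "rep (g + h) = g + h \<longleftrightarrow> rep g \<noteq> g"
  using rep_cases[of g] add_h_neq[of g] by auto

lemma rep_add: "rep (rep a + rep b) = rep (a + b)"
proof -
  have "a + h + (b + h) = a + b" "a + (b + h) = a + b + h" "a + h + b = a + b + h"
    by (metis add.assoc add.commute add_h_h)+
  then have "rep a + rep b = a + b \<or> rep a + rep b = a + b + h"
    using rep_cases[of a] rep_cases[of b] by auto
  then show ?thesis by auto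
qed

lemma coset_inj_on_rep: "inj_on (coset h) {g. rep g = g}"
proof (rule inj_onI)
  fix a b assume "a \<in> {g. rep g = g}" "b \<in> {g. rep g = g}" and eq: "coset h a = coset h b"
  then have a: "rep a = a" and b: "rep b = b" by simp_all
  have "b \<in> coset h a" using eq by (simp add: coset_def)
  then have "b = a \<or> b = a + h" by (simp add: coset_def)
  then show "a = b" using a b rep_add_h[of a] by auto
qed

lemma range_coset: "range (coset h) = coset h ` {g. rep g = g}"
proof
  show "range (coset h) \<subseteq> coset h ` {g. rep g = g}"
  proof
    fix C assume "C \<in> range (coset h)"
    then obtain g where "C = coset h g" by blast
    then have "C = coset h (rep g)" by (simp add: coset_rep)
    then show "C \<in> coset h ` {g. rep g = g}" by simp
  qed
qed blast

lemma setadd_coset: "setadd (coset h a) (coset h b) = coset h (a + b)"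
proof -
  have "setadd (coset h a) (coset h b) = {a + b, a + (b + h), (a + h) + b, (a + h) + (b + h)}"
    unfolding setadd_def coset_def by blast
  moreover have "a + (b + h) = a + b + h" "(a + h) + b = a + b + h" "(a + h) + (b + h) = a + b"
    by (metis add.assoc add.commute add_h_h)+
  ultimately show ?thesis unfolding coset_def by auto
qed

text \<open>A square root \<open>u\<close> of a character \<open>\<chi>\<close> with \<open>\<chi> h = -1\<close>: rescaling \<open>V g\<close> by
  \<open>u g\<close> turns the grading into a loop algebra, and \<open>u (a + b) = \<plusminus> u a u b\<close>.\<close>

definition chi :: "'g \<Rightarrow> complex" where
  "chi = (SOME \<chi>. (\<forall>a b. \<chi> (a + b) = \<chi> a * \<chi> b) \<and> (\<forall>a. \<chi> a \<noteq> 0) \<and> \<chi> h = -1)"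

lemma chi: "chi (a + b) = chi a * chi b" "chi a \<noteq> 0" "chi h = -1"
  using someI_ex[OF character_with_value_minus_one[OF h_nonzero h_order_two]]
  unfolding chi_def[symmetric] by blast+

definition u :: "'g \<Rightarrow> complex" where
  "u g = csqrt (chi g)"

lemma u_square: "(u g)\<^sup>2 = chi g"
  by (simp add: u_def)

lemma u_nonzero: "u g \<noteq> 0"
  using chi(2) by (simp add: u_def)

definition tau :: "'g \<Rightarrow> 'g \<Rightarrow> real" where
  "tau a b = Re (u (a + b) / (u a * u b))"

lemma u_add: "u (a + b) = of_real (tau a b) * (u a * u b)"
  and tau_sign: "tau a b = 1 \<or> tau a b = -1"
proof -
  define r where "r = u (a + b) / (u a * u b)"
  have "r\<^sup>2 = chi (a + b) / (chi a * chi b)"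
    by (simp add: r_def power_divide power_mult_distrib u_square)
  also have "\<dots> = 1" using chi by simp
  finally have "r = 1 \<or> r = -1" by (simp add: power2_eq_1_iff)
  moreover have "u (a + b) = r * (u a * u b)" using u_nonzero by (simp add: r_def)
  ultimately show "u (a + b) = of_real (tau a b) * (u a * u b)" "tau a b = 1 \<or> tau a b = -1"
    unfolding tau_def r_def[symmetric] by auto
qed

lemma tau_square: "tau a b * tau a b = 1"
  using tau_sign[of a b] by auto

lemma sym_cocycle_tau: "sym_cocycle tau"
  unfolding sym_cocycle_def
proof (intro conjI allI)
  show "tau a b \<noteq> 0" "tau a b = tau b a" for a b
    using tau_sign[of a b] by (auto simp: tau_def add.commute mult.commute)
  fix a b c
  have "of_real (tau a b * tau (a + b) c) * (u a * u b * u c) = u (a + b + c)"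
    by (simp only: u_add) (simp add: algebra_simps)
  also have "\<dots> = u (a + (b + c))"
    by (simp add: add.assoc)
  also have "\<dots> = of_real (tau b c * tau a (b + c)) * (u a * u b * u c)"
    by (simp only: u_add) (simp add: algebra_simps)
  finally have "of_real (tau a b * tau (a + b) c) * (u a * u b * u c)
      = of_real (tau b c * tau a (b + c)) * (u a * u b * u c)" .
  moreover have "u a * u b * u c \<noteq> 0" using u_nonzero by simp
  ultimately show "tau a b * tau (a + b) c = tau b c * tau a (b + c)"
    using mult_right_cancel of_real_eq_iff by metis
qed

definition e :: "'g \<Rightarrow> complex" where
  "e g = u g / u (rep g)"

lemma e_nonzero: "e g \<noteq> 0"
  using u_nonzero by (simp add: e_def)

lemma e_rep: "rep g = g \<Longrightarrow> e g = 1"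
  using u_nonzero by (simp add: e_def)

lemma e_not_rep:
  assumes "rep g \<noteq> g"
  shows "e g = \<i> \<or> e g = - \<i>"
proof -
  have "(u g)\<^sup>2 = - (u (rep g))\<^sup>2"
    by (subst not_rep[OF assms]) (simp add: u_square chi)
  then have "(e g)\<^sup>2 = -1" using u_nonzero by (simp add: e_def power_divide)
  then have "(e g - \<i>) * (e g + \<i>) = 0" by (simp add: algebra_simps power2_eq_square)
  then show ?thesis by (auto simp: eq_neg_iff_add_eq_0)
qed

lemma cscale_e_in: "x \<in> V g \<Longrightarrow> cscale (e g) x \<in> V (rep g)"
  using e_rep[of g] e_not_rep[of g] J_degree[of x g] not_rep[of g] add_h_h[of "rep g"]
  by (cases "rep g = g") (auto simp: cscale_ii cscale_minus intro: component_minus)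

lemma cscale_inverse_e_in: "y \<in> V (rep g) \<Longrightarrow> cscale (inverse (e g)) y \<in> V g"
  using e_rep[of g] e_not_rep[of g] J_degree[of y "rep g"] not_rep[of g]
  by (cases "rep g = g") (auto simp: cscale_ii cscale_minus intro: component_minus)

definition block_cscale :: "('g \<Rightarrow> complex) \<Rightarrow> 'b \<Rightarrow> 'b" where
  "block_cscale c = blockwise (\<lambda>g. cscale (c g))"

lemma linear_block_cscale: "linear (block_cscale c)"
  unfolding block_cscale_def by (rule linear_blockwise) (rule linear_cscale)

lemma block_cscale_homogeneous: "x \<in> V g \<Longrightarrow> block_cscale c x = cscale (c g) x"
  unfolding block_cscale_def by (rule blockwise_homogeneous) (rule linear_cscale)

lemma block_cscale_one: "block_cscale (\<lambda>g. 1) x = x"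
  using linear_eqI_homogeneous[OF linear_block_cscale linear_id[unfolded id_def]]
  by (simp add: block_cscale_homogeneous)

context
  fixes c :: "'g \<Rightarrow> complex"
  assumes c_periodic: "\<And>g. c (g + h) = c g"
begin

lemma block_cscale_cscale:
  assumes v: "v \<in> V g"
  shows "block_cscale c (cscale w v) = cscale (c g * w) v"
proof -
  have "block_cscale c (cscale w v) = Re w *\<^sub>R cscale (c g) v + Im w *\<^sub>R cscale (c g) (J v)"
    by (simp add: cscale_def linear_add[OF linear_block_cscale] linear_scale[OF linear_block_cscale]
        block_cscale_homogeneous[OF v] block_cscale_homogeneous[OF J_degree[OF v]] c_periodic)
  also have "\<dots> = cscale (c g * w) v"
    by (simp add: cscale_J cscale_mult mult.commute[of "c g"]) (simp add: cscale_def)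
  finally show ?thesis .
qed

lemma block_cscale_J: "block_cscale c (J x) = J (block_cscale c x)"
proof -
  have "block_cscale c \<circ> J = J \<circ> block_cscale c"
  proof (rule linear_eqI_homogeneous)
    fix i x assume x: "x \<in> V i"
    show "(block_cscale c \<circ> J) x = (J \<circ> block_cscale c) x"
      using block_cscale_homogeneous[OF J_degree[OF x]] block_cscale_homogeneous[OF x]
      by (simp add: c_periodic cscale_J)
  qed (simp_all add: linear_compose linear_J linear_block_cscale)
  then show ?thesis by (simp add: fun_eq_iff)
qed

lemma block_cscale_block_cscale: "block_cscale c (block_cscale d x) = block_cscale (\<lambda>g. c g * d g) x"
proof -
  have "block_cscale c \<circ> block_cscale d = block_cscale (\<lambda>g. c g * d g)"
    by (rule linear_eqI_homogeneous)
      (simp_all add: linear_compose linear_block_cscale block_cscale_homogeneous block_cscale_cscale)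
  then show ?thesis by (simp add: fun_eq_iff)
qed

end

text \<open>\<open>twist\<close> identifies the real form (below) with the real subalgebra
  \<open>\<Oplus>\<^bsub>rep g = g\<^esub> u g V g\<close> of \<open>B\<close>.\<close>

definition twist :: "'b \<Rightarrow> 'b" where
  "twist = block_cscale (\<lambda>g. u (rep g))"

definition untwist :: "'b \<Rightarrow> 'b" where
  "untwist = block_cscale (\<lambda>g. inverse (u (rep g)))"

lemma linear_twist: "linear twist" and linear_untwist: "linear untwist"
  unfolding twist_def untwist_def by (rule linear_block_cscale)+

lemma untwist_twist [simp]: "untwist (twist x) = x"
  unfolding twist_def untwist_def
  by (simp add: block_cscale_block_cscale u_nonzero block_cscale_one)

lemma twist_untwist [simp]: "twist (untwist x) = x"
  unfolding twist_def untwist_def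
  by (simp add: block_cscale_block_cscale u_nonzero block_cscale_one)

lemma twist_J: "twist (J x) = J (twist x)" and untwist_J: "untwist (J x) = J (untwist x)"
  unfolding twist_def untwist_def by (simp_all add: block_cscale_J)

lemma twist_cscale_e: "x \<in> V g \<Longrightarrow> twist (cscale (e g) x) = cscale (u g) x"
  unfolding twist_def using u_nonzero by (simp add: block_cscale_cscale e_def)

lemma untwist_cscale_u: "x \<in> V g \<Longrightarrow> untwist (cscale (u g) x) = cscale (e g) x"
  unfolding untwist_def by (simp add: block_cscale_cscale e_def divide_inverse mult.commute)

definition real_form :: "'b set" where
  "real_form = {x. \<forall>g. rep g \<noteq> g \<longrightarrow> proj x g = 0}"

lemma subspace_real_form: "subspace real_form"
  by (rule subspaceI) (auto simp: real_form_def proj_add proj_scale linear_0[OF linear_proj])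

lemma homogeneous_in_real_form: "y \<in> V g \<Longrightarrow> rep g = g \<Longrightarrow> y \<in> real_form"
  by (auto simp: real_form_def proj_homogeneous)

definition form_proj :: "'b \<Rightarrow> 'b" where
  "form_proj = blockwise (\<lambda>g v. if rep g = g then v else 0)"

lemma linear_if_id: "linear (\<lambda>v::'b. if P then v else 0)"
  by (cases P) (simp_all add: linear_id[unfolded id_def] linear_zero)

lemma linear_form_proj: "linear form_proj"
  unfolding form_proj_def by (rule linear_blockwise) (rule linear_if_id)

lemma form_proj_homogeneous: "x \<in> V g \<Longrightarrow> form_proj x = (if rep g = g then x else 0)"
  unfolding form_proj_def by (rule blockwise_homogeneous) (rule linear_if_id)

lemma proj_form_proj: "proj (form_proj x) g = (if rep g = g then proj x g else 0)"
  unfolding form_proj_def by (rule proj_blockwise) (simp_all add: linear_if_id component_0)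

lemma form_proj_in_real_form: "form_proj x \<in> real_form"
  by (simp add: real_form_def proj_form_proj)

lemma form_proj_real_form: "x \<in> real_form \<Longrightarrow> form_proj x = x"
  by (rule proj_inject) (simp add: proj_form_proj real_form_def)

lemma form_proj_J: "form_proj (J x) = J (x - form_proj x)"
proof -
  have "form_proj \<circ> J = J \<circ> (\<lambda>x. x - form_proj x)"
  proof (rule linear_eqI_homogeneous)
    fix g x assume x: "x \<in> V g"
    show "(form_proj \<circ> J) x = (J \<circ> (\<lambda>x. x - form_proj x)) x"
      using form_proj_homogeneous[OF x] form_proj_homogeneous[OF J_degree[OF x]] rep_add_h_iff[of g]
      by auto
  qed (auto intro!: linear_compose[OF _ linear_J, unfolded o_def] linear_compose linear_J
      linear_form_proj linear_compose_sub linear_id[unfolded id_def])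
  then show ?thesis by (simp add: fun_eq_iff)
qed

lemma form_proj_add_J: "a \<in> real_form \<Longrightarrow> b \<in> real_form \<Longrightarrow> form_proj (a + J b) = a"
  by (simp add: linear_add[OF linear_form_proj] form_proj_J form_proj_real_form)

definition form_mult :: "'b \<Rightarrow> 'b \<Rightarrow> 'b" where
  "form_mult p q = untwist (m (twist p) (twist q))"

lemma linear_form_mult_left: "linear (\<lambda>p. form_mult p q)"
  using linear_compose[OF linear_compose[OF linear_twist linear_mult_left] linear_untwist]
  by (simp add: o_def form_mult_def)

lemma linear_form_mult_right: "linear (form_mult p)"
  using linear_compose[OF linear_compose[OF linear_twist linear_mult_right] linear_untwist]
  by (simp add: o_def form_mult_def[abs_def])

lemma form_mult_J_left: "form_mult (J p) q = J (form_mult p q)"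
  by (simp add: form_mult_def twist_J mult_J_left untwist_J)

lemma form_mult_J_right: "form_mult p (J q) = J (form_mult p q)"
  by (simp add: form_mult_def twist_J mult_J_right untwist_J)

lemma untwist_mult: "untwist (m x y) = form_mult (untwist x) (untwist y)"
  by (simp add: form_mult_def)

lemma form_mult_cscale_e:
  assumes x: "x \<in> V a" and y: "y \<in> V b"
  shows "form_mult (cscale (e a) x) (cscale (e b) y) = tau a b *\<^sub>R cscale (e (a + b)) (m x y)"
proof -
  have "form_mult (cscale (e a) x) (cscale (e b) y) = untwist (cscale (u b) (cscale (u a) (m x y)))"
    by (simp add: form_mult_def twist_cscale_e[OF x] twist_cscale_e[OF y]
        mult_cscale_left mult_cscale_right)
  also have "\<dots> = untwist (cscale (u a * u b) (m x y))"
    by (simp only: mult.commute[of "u a" "u b"] cscale_mult)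
  also have "u a * u b = of_real (tau a b) * u (a + b)"
    using u_add[of a b] tau_sign[of a b] by auto
  also have "untwist (cscale (of_real (tau a b) * u (a + b)) (m x y))
      = tau a b *\<^sub>R untwist (cscale (u (a + b)) (m x y))"
    by (simp add: cscale_mult cscale_of_real linear_scale[OF linear_untwist])
  also have "\<dots> = tau a b *\<^sub>R cscale (e (a + b)) (m x y)"
    by (simp add: untwist_cscale_u[OF mult_component[OF x y]])
  finally show ?thesis .
qed

lemma form_mult_homogeneous:
  assumes x: "x \<in> V a" "rep a = a" and y: "y \<in> V b" "rep b = b"
  shows "form_mult x y \<in> V (rep (a + b))"
  using form_mult_cscale_e[OF x(1) y(1)] e_rep[OF x(2)] e_rep[OF y(2)]
    component_scale[OF cscale_e_in[OF mult_component[OF x(1) y(1)]]]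
  by simp

lemma form_mult_closed:
  assumes p: "p \<in> real_form" and q: "q \<in> real_form"
  shows "form_mult p q \<in> real_form"
proof -
  have "form_mult p q = (\<Sum>i | proj p i \<noteq> 0. \<Sum>j | proj q j \<noteq> 0. form_mult (proj p i) (proj q j))"
    by (rule bilinear_sum_proj[OF linear_form_mult_right linear_form_mult_left])
  also have "\<dots> \<in> real_form"
  proof (intro subspace_sum[OF subspace_real_form])
    fix i j assume "i \<in> {i. proj p i \<noteq> 0}" "j \<in> {j. proj q j \<noteq> 0}"
    with p q have "rep i = i" "rep j = j" by (auto simp: real_form_def)
    from form_mult_homogeneous[OF proj_in this(1) proj_in this(2)]
    show "form_mult (proj p i) (proj q j) \<in> real_form"
      by (rule homogeneous_in_real_form) simp
  qed
  finally show ?thesis .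
qed

definition form_component :: "'g set \<Rightarrow> 'b set" where
  "form_component C = V (SOME k. k \<in> C)"

lemma form_component_coset [simp]: "form_component (coset h g) = V (rep g)"
  by (simp add: form_component_def rep_def)

definition loop_iso :: "'b \<Rightarrow> 'g \<Rightarrow> 'b" where
  "loop_iso x = (\<lambda>g. cscale (e g) (proj x g))"

lemma loop_iso_support: "{g. loop_iso x g \<noteq> 0} = {g. proj x g \<noteq> 0}"
  by (simp add: loop_iso_def cscale_eq_0_iff e_nonzero)

lemma loop_iso_in_carrier: "loop_iso x \<in> loop_carrier h form_component"
  unfolding loop_carrier_def using loop_iso_support[of x] by (simp add: loop_iso_def cscale_e_in)

lemma loop_iso_surj:
  assumes f: "f \<in> loop_carrier h form_component"
  obtains x where "loop_iso x = f" and "\<And>k. proj x k = cscale (inverse (e k)) (f k)"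
proof -
  have fin: "finite {g. f g \<noteq> 0}" and fV: "\<And>g. f g \<in> V (rep g)"
    using f by (auto simp: loop_carrier_def)
  define x where "x = (\<Sum>g | f g \<noteq> 0. cscale (inverse (e g)) (f g))"
  have "proj x = (\<lambda>g. cscale (inverse (e g)) (f g))"
    by (rule proj_eqI[OF _ fin]) (auto simp: x_def cscale_inverse_e_in[OF fV])
  moreover have "cscale (e g) (cscale (inverse (e g)) y) = y" for g y
    using e_nonzero by (simp flip: cscale_mult)
  ultimately show ?thesis using that[of x] by (simp add: loop_iso_def)
qed

lemma loop_iso_mult: "loop_iso (m x y) = loop_mul form_mult tau (loop_iso x) (loop_iso y)"
proof
  fix k
  have "loop_mul form_mult tau (loop_iso x) (loop_iso y) k
      = (\<Sum>a | proj x a \<noteq> 0. tau a (k - a) *\<^sub>R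
           form_mult (cscale (e a) (proj x a)) (cscale (e (k - a)) (proj y (k - a))))"
    unfolding loop_mul_def loop_iso_support by (simp only: loop_iso_def)
  also have "\<dots> = (\<Sum>a | proj x a \<noteq> 0. cscale (e k) (m (proj x a) (proj y (k - a))))"
    by (rule sum.cong[OF refl]) (simp add: form_mult_cscale_e[OF proj_in proj_in] tau_square)
  also have "\<dots> = loop_iso (m x y) k"
    by (simp add: loop_iso_def proj_mult cscale_sum)
  finally show "loop_iso (m x y) k = loop_mul form_mult tau (loop_iso x) (loop_iso y) k" ..
qed

lemma loop_iso_component: "loop_iso ` V g = loop_comp h form_component g"
proof
  show "loop_iso ` V g \<subseteq> loop_comp h form_component g"
    using loop_iso_in_carrier by (auto simp: loop_comp_def loop_iso_def proj_homogeneous_other)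
  show "loop_comp h form_component g \<subseteq> loop_iso ` V g"
  proof
    fix f assume "f \<in> loop_comp h form_component g"
    then have f: "f \<in> loop_carrier h form_component" and f0: "\<And>k. k \<noteq> g \<Longrightarrow> f k = 0"
      by (auto simp: loop_comp_def)
    obtain x where x: "loop_iso x = f" and proj_x: "\<And>k. proj x k = cscale (inverse (e k)) (f k)"
      using loop_iso_surj[OF f] by blast
    have "x = sum (proj x) {g}"
      by (rule sum_proj_superset[symmetric]) (use f0 in \<open>auto simp: proj_x, metis cscale_0_right\<close>)
    then have "x \<in> V g" using proj_in[of x g] by simp
    with x show "f \<in> loop_iso ` V g" by blast
  qed
qed

lemma graded_iso_loop_iso: "graded_iso_loop m V h form_mult form_component tau loop_iso"
  unfolding graded_iso_loop_def
proof (intro conjI allI)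
  show "bij_betw loop_iso UNIV (loop_carrier h form_component)"
    unfolding bij_betw_def
  proof
    show "inj loop_iso"
    proof (rule injI)
      fix x y assume eq: "loop_iso x = loop_iso y"
      show "x = y"
      proof (rule proj_inject)
        fix g
        have "cscale (e g) (proj x g) = cscale (e g) (proj y g)"
          using fun_cong[OF eq, of g] unfolding loop_iso_def .
        then have "cscale (inverse (e g)) (cscale (e g) (proj x g))
            = cscale (inverse (e g)) (cscale (e g) (proj y g))" by simp
        then show "proj x g = proj y g" by (simp only: cscale_inverse[OF e_nonzero])
      qed
    qed
    show "range loop_iso = loop_carrier h form_component"
    proof
      show "range loop_iso \<subseteq> loop_carrier h form_component" using loop_iso_in_carrier by blast
      show "loop_carrier h form_component \<subseteq> range loop_iso"
      proof
        fix f assume "f \<in> loop_carrier h form_component"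
        then obtain x where "loop_iso x = f" using loop_iso_surj by blast
        then show "f \<in> range loop_iso" by blast
      qed
    qed
  qed
  show "loop_iso (x + y) = (\<lambda>k. loop_iso x k + loop_iso y k)" for x y
    by (simp add: loop_iso_def proj_add cscale_add)
  show "loop_iso (r *\<^sub>R x) = (\<lambda>k. r *\<^sub>R loop_iso x k)" for r x
    by (simp add: loop_iso_def proj_scale cscale_scale)
qed (simp_all add: loop_iso_mult loop_iso_component)

text \<open>Every \<open>x\<close> is \<open>twist (a + J b)\<close> for unique \<open>a, b\<close> in the real form.\<close>

definition form_split :: "'b \<Rightarrow> 'b \<times> 'b" where
  "form_split x = (form_proj (untwist x), - J (untwist x - form_proj (untwist x)))"

definition form_join :: "'b \<times> 'b \<Rightarrow> 'b" where
  "form_join p = twist (fst p + J (snd p))"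

lemma form_split_in_real_form: "fst (form_split x) \<in> real_form" "snd (form_split x) \<in> real_form"
proof -
  show "fst (form_split x) \<in> real_form" by (simp add: form_split_def form_proj_in_real_form)
  have "form_proj (- J (untwist x - form_proj (untwist x))) = - J (untwist x - form_proj (untwist x))"
    by (simp add: linear_neg[OF linear_form_proj] linear_diff[OF linear_form_proj] form_proj_J
        form_proj_real_form[OF form_proj_in_real_form])
  then show "snd (form_split x) \<in> real_form"
    by (metis form_split_def form_proj_in_real_form snd_conv)
qed

lemma untwist_form_split: "untwist x = fst (form_split x) + J (snd (form_split x))"
  by (simp add: form_split_def J_minus)

lemma form_split_join: "a \<in> real_form \<Longrightarrow> b \<in> real_form \<Longrightarrow> form_split (form_join (a, b)) = (a, b)"
  by (simp add: form_split_def form_join_def form_proj_add_J)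

lemma form_join_split [simp]: "form_join (form_split x) = x"
  unfolding form_join_def by (simp flip: untwist_form_split)

lemma form_split_inject: "form_split x = form_split y \<Longrightarrow> x = y"
  by (metis form_join_split)

lemma form_split_add: "form_split (x + y) = (fst (form_split x) + fst (form_split y), snd (form_split x) + snd (form_split y))"
  by (simp add: form_split_def linear_add[OF linear_untwist] linear_add[OF linear_form_proj]
      J_add J_diff algebra_simps)

lemma form_split_scale: "form_split (r *\<^sub>R x) = (r *\<^sub>R fst (form_split x), r *\<^sub>R snd (form_split x))"
  by (simp add: form_split_def linear_scale[OF linear_untwist] linear_scale[OF linear_form_proj]
      J_scale J_diff scaleR_diff_right)

lemma form_split_J: "form_split (J x) = (- snd (form_split x), fst (form_split x))"
  by (simp add: form_split_def untwist_J form_proj_J J_diff J_minus)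

lemma form_split_zero: "form_split 0 = (0, 0)"
  using form_split_scale[of 0 0] by simp

lemma form_split_mult:
  "form_split (m x y) =
    (form_mult (fst (form_split x)) (fst (form_split y)) - form_mult (snd (form_split x)) (snd (form_split y)),
     form_mult (fst (form_split x)) (snd (form_split y)) + form_mult (snd (form_split x)) (fst (form_split y)))"
proof -
  obtain a1 a2 b1 b2 where x: "form_split x = (a1, a2)" and y: "form_split y = (b1, b2)"
    by (cases "form_split x", cases "form_split y") blast
  then have in_form: "a1 \<in> real_form" "a2 \<in> real_form" "b1 \<in> real_form" "b2 \<in> real_form"
    using form_split_in_real_form[of x] form_split_in_real_form[of y] by simp_all
  have "untwist (m x y) = form_mult (a1 + J a2) (b1 + J b2)"
    using untwist_form_split[of x] untwist_form_split[of y] x y by (simp add: untwist_mult)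
  also have "\<dots> = (form_mult a1 b1 - form_mult a2 b2) + J (form_mult a1 b2 + form_mult a2 b1)"
    by (simp add: linear_add[OF linear_form_mult_left] linear_add[OF linear_form_mult_right]
        form_mult_J_left form_mult_J_right J_add algebra_simps)
  finally have "m x y = form_join (form_mult a1 b1 - form_mult a2 b2, form_mult a1 b2 + form_mult a2 b1)"
    by (metis form_join_def fst_conv snd_conv twist_untwist)
  moreover have "form_mult a1 b1 - form_mult a2 b2 \<in> real_form"
    "form_mult a1 b2 + form_mult a2 b1 \<in> real_form"
    using in_form by (auto intro!: subspace_diff[OF subspace_real_form] subspace_add[OF subspace_real_form]
        form_mult_closed)
  ultimately show ?thesis using x y by (simp add: form_split_join)
qed

lemma complexification_iso_form_split: "complexification_iso J m real_form form_mult form_split"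
  unfolding complexification_iso_def
proof (intro conjI allI)
  show "bij_betw form_split UNIV (real_form \<times> real_form)"
    unfolding bij_betw_def
  proof
    show "inj form_split" by (rule injI) (rule form_split_inject)
    show "range form_split = real_form \<times> real_form"
    proof
      show "range form_split \<subseteq> real_form \<times> real_form"
        by (simp add: image_subset_iff mem_Times_iff form_split_in_real_form)
      show "real_form \<times> real_form \<subseteq> range form_split"
      proof
        fix p assume "p \<in> real_form \<times> real_form"
        then obtain a b where "p = (a, b)" "a \<in> real_form" "b \<in> real_form" by blast
        then show "p \<in> range form_split" using form_split_join by (metis rangeI)
      qed
    qed
  qed
qed (simp_all add: form_split_add form_split_scale form_split_J form_split_mult)

lemma ralg_real_form: "ralg real_form form_mult"
  unfolding ralg_def
  using subspace_real_form form_mult_closed linear_add[OF linear_form_mult_left]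
    linear_add[OF linear_form_mult_right] linear_scale[OF linear_form_mult_left]
    linear_scale[OF linear_form_mult_right]
  by simp

lemma form_split_preimage_cideal:
  assumes I: "rideal real_form form_mult I"
  shows "cideal J m {x. fst (form_split x) \<in> I \<and> snd (form_split x) \<in> I}"
    (is "cideal J m ?I")
proof -
  have sI: "subspace I" and ideal: "\<And>x y. x \<in> real_form \<Longrightarrow> y \<in> I \<Longrightarrow> form_mult x y \<in> I \<and> form_mult y x \<in> I"
    using I by (auto simp: rideal_def)
  have "linear (\<lambda>x. fst (form_split x))" "linear (\<lambda>x. snd (form_split x))"
    by (intro linearI; simp add: form_split_add form_split_scale)+
  then have "subspace ?I"
    using subspace_inter[OF subspace_linear_preimage subspace_linear_preimage, OF _ sI _ sI]
    by (simp add: Collect_conj_eq)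
  moreover have "m x y \<in> ?I \<and> m y x \<in> ?I" if "y \<in> ?I" for x y
    using that ideal[OF form_split_in_real_form(1)] ideal[OF form_split_in_real_form(2)]
    by (simp add: form_split_mult subspace_diff[OF sI] subspace_add[OF sI])
  moreover have "J ` ?I \<subseteq> ?I"
    by (auto simp: form_split_J subspace_neg[OF sI])
  ultimately show ?thesis by (simp add: cideal_def rideal_def)
qed

lemma rsimple_real_form: "rsimple real_form form_mult"
  unfolding rsimple_def
proof (intro conjI allI impI)
  show "\<exists>x\<in>real_form. \<exists>y\<in>real_form. form_mult x y \<noteq> 0"
  proof (rule ccontr)
    assume "\<not> ?thesis"
    then have "form_split (m x y) = form_split 0" for x y
      using form_split_in_real_form by (simp add: form_split_mult form_split_zero)
    then have "m x y = 0" for x y by (rule form_split_inject)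
    with nontrivial_product show False by blast
  qed
next
  fix I assume I: "rideal real_form form_mult I"
  then have sub: "I \<subseteq> real_form" and zero: "0 \<in> I" "0 \<in> real_form"
    using subspace_0[OF subspace_real_form] by (auto simp: rideal_def dest: subspace_0)
  have split_join: "form_split (form_join (a, 0)) = (a, 0)" if "a \<in> I" for a
    using that sub zero by (auto intro: form_split_join)
  from cideal_trivial[OF form_split_preimage_cideal[OF I]]
  show "I = {0} \<or> I = real_form"
  proof
    assume "{x. fst (form_split x) \<in> I \<and> snd (form_split x) \<in> I} = {0}"
    then have "form_join (a, 0) = 0" if "a \<in> I" for a
      using that split_join zero by (metis (mono_tags, lifting) fst_conv mem_Collect_eq singletonD snd_conv)
    then have "I \<subseteq> {0}" using split_join form_split_zero by (metis Pair_inject subsetI singletonI)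
    with zero show ?thesis by blast
  next
    assume "{x. fst (form_split x) \<in> I \<and> snd (form_split x) \<in> I} = UNIV"
    then have "real_form \<subseteq> I"
      using form_split_join zero by (metis (mono_tags, lifting) UNIV_I fst_conv mem_Collect_eq subsetI)
    with sub show ?thesis by blast
  qed
qed

text \<open>A centroid element \<open>c\<close> of the real form extends \<open>\<complex>\<close>-linearly to the centroid of
  \<open>B\<close>, hence is a complex scalar, which must be real as \<open>c\<close> preserves the real form.\<close>

lemma rcentroid_real_form:
  assumes c: "c \<in> rcentroid real_form form_mult"
  shows "\<exists>r. \<forall>x\<in>real_form. c x = r *\<^sub>R x"
proof -
  have c_in: "\<And>x. x \<in> real_form \<Longrightarrow> c x \<in> real_form"
    and c_add: "\<And>x y. x \<in> real_form \<Longrightarrow> y \<in> real_form \<Longrightarrow> c (x + y) = c x + c y"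
    and c_scale: "\<And>r x. x \<in> real_form \<Longrightarrow> c (r *\<^sub>R x) = r *\<^sub>R c x"
    and c_mult_left: "\<And>x y. x \<in> real_form \<Longrightarrow> y \<in> real_form \<Longrightarrow>
      c (form_mult x y) = form_mult (c x) y"
    and c_mult_right: "\<And>x y. x \<in> real_form \<Longrightarrow> y \<in> real_form \<Longrightarrow>
      c (form_mult x y) = form_mult x (c y)"
    using c unfolding rcentroid_def lin_on_def by blast+
  have c_minus: "c (- x) = - c x" if "x \<in> real_form" for x
    using c_scale[OF that, of "-1"] by simp
  have c_diff: "c (x - y) = c x - c y" if "x \<in> real_form" "y \<in> real_form" for x y
    using c_add[OF that(1) subspace_neg[OF subspace_real_form that(2)]] c_minus[OF that(2)] by simp
  define c' where "c' x = form_join (c (fst (form_split x)), c (snd (form_split x)))" for x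
  have split_c': "form_split (c' x) = (c (fst (form_split x)), c (snd (form_split x)))" for x
    unfolding c'_def by (rule form_split_join) (simp_all add: c_in form_split_in_real_form)
  note in_form = form_split_in_real_form
  have "c' \<in> ccentroid J m"
    unfolding ccentroid_def
  proof (intro CollectI conjI allI)
    show "linear c'"
      by (rule linearI; rule form_split_inject)
        (simp_all add: split_c' form_split_add form_split_scale c_add c_scale in_form)
    show "c' (J x) = J (c' x)" for x
      by (rule form_split_inject) (simp add: split_c' form_split_J c_minus in_form)
    show "c' (m x y) = m (c' x) y" for x y
      by (rule form_split_inject)
        (simp add: split_c' form_split_mult c_diff c_add form_mult_closed in_form c_mult_left)
    show "c' (m x y) = m x (c' y)" for x y
      by (rule form_split_inject)
        (simp add: split_c' form_split_mult c_diff c_add form_mult_closed in_form c_mult_right)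
  qed
  then obtain a b where c': "c' = (\<lambda>x. a *\<^sub>R x + b *\<^sub>R J x)" using ccentroid_scalars by blast
  have "c x = a *\<^sub>R x" if x: "x \<in> real_form" for x
  proof -
    have split: "form_split (form_join (x, 0)) = (x, 0)"
      using x subspace_0[OF subspace_real_form] by (rule form_split_join)
    have "c 0 = 0" using c_scale[OF subspace_0[OF subspace_real_form], of 0] by simp
    then have "form_split (c' (form_join (x, 0))) = (c x, 0)" by (simp add: split_c' split)
    moreover have "form_split (c' (form_join (x, 0))) = (a *\<^sub>R x, b *\<^sub>R x)"
      by (simp add: c' form_split_add form_split_scale form_split_J split)
    ultimately show ?thesis by simp
  qed
  then show ?thesis by blast
qed

lemma rcentral_simple_real_form: "rcentral_simple real_form form_mult"
  unfolding rcentral_simple_def using ralg_real_form rsimple_real_form rcentroid_real_form by blast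

lemma grading_real_form: "grading real_form form_mult (range (coset h)) setadd form_component"
  unfolding grading_def
proof (intro conjI ballI)
  fix C assume "C \<in> range (coset h)"
  then obtain g where C: "C = coset h g" by blast
  show "subspace (form_component C)" using C subspace_component by simp
  show "form_component C \<subseteq> real_form" using C homogeneous_in_real_form by auto
next
  fix C D x y
  assume "C \<in> range (coset h)" "D \<in> range (coset h)" "x \<in> form_component C" "y \<in> form_component D"
  then obtain a b where "C = coset h a" "D = coset h b" "x \<in> V (rep a)" "y \<in> V (rep b)" by auto
  with form_mult_homogeneous[of x "rep a" y "rep b"]
  show "form_mult x y \<in> form_component (setadd C D)" by (simp add: setadd_coset rep_add)
next
  fix x assume "x \<in> real_form"
  then have "\<And>g. g \<notin> {g. rep g = g} \<Longrightarrow> proj x g = 0" by (simp add: real_form_def)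
  from unique_decomposition_reindex[OF coset_inj_on_rep this]
  show "\<exists>!f. (\<forall>i. i \<notin> range (coset h) \<longrightarrow> f i = 0) \<and> (\<forall>i\<in>range (coset h). f i \<in> form_component i)
      \<and> finite {i. f i \<noteq> 0} \<and> x = (\<Sum>i | f i \<noteq> 0. f i)"
    by (simp add: range_coset)
qed

end

lemma graded_complex_algebraI:
  assumes "ccentral_simple J m" and "grading UNIV m UNIV (+) V"
  shows "graded_complex_algebra J m V"
  using assms by unfold_locales (auto simp: ccentral_simple_def grading_def)

theorem mainTheorem8:
  fixes J :: "'b::real_vector \<Rightarrow> 'b" and m :: "'b \<Rightarrow> 'b \<Rightarrow> 'b"
    and V :: "'g::ab_group_add \<Rightarrow> 'b set"
  assumes B: "ccentral_simple J m"
    and Gamma: "grading UNIV m UNIV (+) V"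
  shows "(rcentroid UNIV m = cent_comp m V 0 \<and> (\<forall>g. J ` V g \<subseteq> V g))
    \<or> (\<exists>h. h \<noteq> 0 \<and> h + h = 0
         \<and> cent_comp m V 0 = {(\<lambda>x. r *\<^sub>R x) | r. True}
         \<and> cent_comp m V h = {(\<lambda>x. r *\<^sub>R J x) | r. True}
         \<and> graded_central_simple m V
         \<and> (\<exists>S m' W \<tau> \<phi> \<psi>. rcentral_simple S m'
              \<and> grading S m' (range (coset h)) setadd W
              \<and> sym_cocycle \<tau>
              \<and> graded_iso_loop m V h m' W \<tau> \<phi>
              \<and> complexification_iso J m S m' \<psi>))"
proof -
  interpret graded_complex_algebra J m V
    using B Gamma by (rule graded_complex_algebraI)
  show ?thesis
  proof (cases "\<forall>g. J ` V g \<subseteq> V g")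
    case True
    with rcentroid_eq_cent_comp_0 show ?thesis by blast
  next
    case False
    then obtain h where h: "h \<noteq> 0" "h + h = 0" "\<And>g y. y \<in> V g \<Longrightarrow> J y \<in> V (g + h)"
      using J_homogeneous_of_order_two_degree by blast
    interpret J_of_degree J m V h
      using h by unfold_locales
    show ?thesis
      using h(1,2) cent_comp_0_eq cent_comp_h_eq graded_central_simple rcentral_simple_real_form
        grading_real_form sym_cocycle_tau graded_iso_loop_iso complexification_iso_form_split
      by blast
  qed
qed

end
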